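(* Let $p>3$ be a prime and let $x=r/m$, where $0<r<m$ are integers with $m$ prime to $p$. Then $$\sum_{k=1}^{p-1} {(x)_k(1-x)_k\over (1)_k^2}\cdot{1\over k}\equiv Q_p(x) +{1\over 2}p\,Q_p(x)^2\pmod{p^2},$$ $$\sum_{k=1}^{p-1} {(x)_k(1-x)_k\over (1)_k^2}\cdot{1\over k^2}\equiv -{1\over 2}Q_p(x)^2\pmod{p}.$$
   Context: $(y)_n=y(y+1)\cdots(y+n-1)$ denotes the Pochhammer symbol. For an integer $m$ and a rational $a$ whose denominator is prime to $m$, $[a]_m$ denotes the unique representative of $a$ modulo $m$ in $\{0,1,\dots,m-1\}$. The Pochhammer quotient is $$Q_p(x)={1\over p}\left(1-{(x)_p(1-x)_p\over (1)^2_p}\cdot {m^2\over [r/p]_m[-r/p]_m}\right),$$ which is a $p$-integral rational number. Congruences between rational numbers modulo $p^j$ mean that the difference is a rational number whose numerator is divisible by $p^j$ and whose denominator is prime to $p$. *)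

theory Defs
  imports Complex_Main "HOL-Computational_Algebra.Primes"
begin

definition rat_cong :: "int \<Rightarrow> rat \<Rightarrow> rat \<Rightarrow> bool" where
  "rat_cong n a b \<longleftrightarrow>
     (case quotient_of (a - b) of (num, den) \<Rightarrow> n dvd num \<and> coprime den n)"

text \<open>[a]_m: the unique representative of the rational a modulo m in {0,...,m-1}
  (defined when the denominator of a is prime to m).\<close>
definition rat_rep :: "rat \<Rightarrow> int \<Rightarrow> int" where
  "rat_rep a m = (THE k. 0 \<le> k \<and> k < m \<and> rat_cong m a (of_int k))"

definition Qp :: "nat \<Rightarrow> int \<Rightarrow> int \<Rightarrow> rat" where
  "Qp p r m =
     (let x = of_int r / of_int m :: rat in
      (1 / of_nat p) *
        (1 - pochhammer x p * pochhammer (1 - x) p / (pochhammer 1 p)^2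
             * (of_int m)^2
             / (of_int (rat_rep (of_int r / of_nat p) m)
                * of_int (rat_rep (- of_int r / of_nat p) m))))"

end

theory Submission
  imports Defs "HOL-Number_Theory.Number_Theory"
begin

text \<open>Choose \<open>0 \<le> s < p\<close> with \<open>p | r + s m\<close>; then \<open>u = x + s = p t / m\<close> is divisible by \<open>p\<close> in
  \<open>\<int>\<^sub>(\<^sub>p\<^sub>)\<close>, and \<open>[r/p]\<^sub>m = t\<close>, \<open>[-r/p]\<^sub>m = m - t\<close>.

  For \<open>k < p\<close> the term \<open>(x)\<^sub>k (1 - x)\<^sub>k / k!\<^sup>2\<close> is a polynomial with \<open>p\<close>-integral coefficients in
  \<open>z = (x + s)(1 + s - x)\<close>, which is divisible by \<open>p\<close>; modulo \<open>p\<^sup>2\<close> such a polynomial is determined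
  near \<open>0\<close> by its values at \<open>0\<close> and at one other node divisible by \<open>p\<close>. The nodes
  \<open>z = (s - i)(s + i + 1)\<close> correspond to \<open>x = -i\<close>, where the series terminates and the sums with
  weights \<open>1/k\<close> and \<open>1/k\<^sup>2\<close> equal \<open>-2 H(i)\<close> and \<open>-2 H(i)\<^sup>2\<close>. The nodes \<open>i = s\<close> and
  \<open>i = p - 1 - s\<close> express both sums through \<open>H(s)\<close> and \<open>H(p - 1 - s)\<close>.

  On the other side \<open>Q\<^sub>p(x) = (1 - P)/p\<close> with \<open>P = \<Prod>\<^bsub>j \<noteq> s\<^esub> (j - s + u)(p - j + s - u) / ((p - 1)!)\<^sup>2\<close>.
  Expanding this product modulo \<open>p\<^sup>3\<close>, using that \<open>\<Sum> 1/c\<close> and \<open>\<Sum> 1/c\<^sup>2\<close> over the nonzero residues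
  \<open>c\<close> vanish modulo \<open>p\<close>, gives \<open>P \<equiv> 1 + 2p H(s) + 2p\<^sup>2 H(s)\<^sup>2 + 2u (H(p - 1 - s) - H(s))\<close>.
  Comparing the two expansions yields both congruences.\<close>

section \<open>Rationals integral at a prime\<close>

text \<open>Membership in the localisation \<open>\<int>\<^sub>(\<^sub>p\<^sub>)\<close>, in its ideal \<open>p\<^sup>e \<int>\<^sub>(\<^sub>p\<^sub>)\<close> and in its unit group.\<close>

definition padic_int :: "nat \<Rightarrow> rat \<Rightarrow> bool" where
  "padic_int p q \<longleftrightarrow> (\<exists>a b. \<not> int p dvd b \<and> q = of_int a / of_int b)"

definition padic_dvd :: "nat \<Rightarrow> nat \<Rightarrow> rat \<Rightarrow> bool" where
  "padic_dvd p e q \<longleftrightarrow> (\<exists>c. padic_int p c \<and> q = of_nat p ^ e * c)"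

definition padic_unit :: "nat \<Rightarrow> rat \<Rightarrow> bool" where
  "padic_unit p q \<longleftrightarrow> (\<exists>a b. \<not> int p dvd a \<and> \<not> int p dvd b \<and> q = of_int a / of_int b)"

context
  fixes p :: nat
  assumes prime: "prime p"
begin

lemma prime_not_dvd_mult: "\<not> int p dvd a \<Longrightarrow> \<not> int p dvd b \<Longrightarrow> \<not> int p dvd (a * b)"
  using prime by (simp add: prime_dvd_mult_iff)

lemma padic_int_of_int [simp]: "padic_int p (of_int a)"
  unfolding padic_int_def using prime
  by (intro exI[of _ a] exI[of _ 1]) (auto simp: prime_gt_1_nat)

lemma padic_int_of_nat [simp]: "padic_int p (of_nat a)"
  using padic_int_of_int[of "int a"] by simp

lemma padic_int_0 [simp]: "padic_int p 0"
  using padic_int_of_int[of 0] by simp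

lemma padic_int_1 [simp]: "padic_int p 1"
  using padic_int_of_int[of 1] by simp

lemma padic_int_numeral [simp]: "padic_int p (numeral n)"
  using padic_int_of_int[of "numeral n"] by simp

lemma padic_int_add:
  assumes "padic_int p x" "padic_int p y"
  shows "padic_int p (x + y)"
proof -
  obtain a b c d where x: "\<not> int p dvd b" "x = of_int a / of_int b"
    and y: "\<not> int p dvd d" "y = of_int c / of_int d"
    using assms unfolding padic_int_def by blast
  have "b \<noteq> 0" "d \<noteq> 0" using x y by auto
  then have "x + y = of_int (a * d + c * b) / of_int (b * d)" using x y by (simp add: field_simps)
  then show ?thesis unfolding padic_int_def using prime_not_dvd_mult[OF x(1) y(1)] by blast
qed

lemma padic_int_mult:
  assumes "padic_int p x" "padic_int p y"
  shows "padic_int p (x * y)"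
proof -
  obtain a b c d where x: "\<not> int p dvd b" "x = of_int a / of_int b"
    and y: "\<not> int p dvd d" "y = of_int c / of_int d"
    using assms unfolding padic_int_def by blast
  have "x * y = of_int (a * c) / of_int (b * d)" using x y by simp
  then show ?thesis unfolding padic_int_def using prime_not_dvd_mult[OF x(1) y(1)] by blast
qed

lemma padic_int_uminus: "padic_int p x \<Longrightarrow> padic_int p (- x)"
  using padic_int_mult[OF padic_int_of_int[of "-1"]] by simp

lemma padic_int_diff: "padic_int p x \<Longrightarrow> padic_int p y \<Longrightarrow> padic_int p (x - y)"
  using padic_int_add[of x "- y"] padic_int_uminus[of y] by simp

lemma padic_int_sum: "(\<And>i. i \<in> A \<Longrightarrow> padic_int p (f i)) \<Longrightarrow> padic_int p (sum f A)"
  by (induction A rule: infinite_finite_induct) (auto intro: padic_int_add)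

lemma padic_int_power: "padic_int p x \<Longrightarrow> padic_int p (x ^ n)"
  by (induction n) (auto intro: padic_int_mult)

lemma padic_int_inverse_unit: "padic_unit p x \<Longrightarrow> padic_int p (1 / x)"
proof -
  assume "padic_unit p x"
  then obtain a b where "\<not> int p dvd a" "x = of_int a / of_int b"
    unfolding padic_unit_def by blast
  then show ?thesis unfolding padic_int_def by (intro exI[of _ b] exI[of _ a]) simp
qed

lemma padic_unit_nonzero: "padic_unit p x \<Longrightarrow> x \<noteq> 0"
  unfolding padic_unit_def by auto

lemma padic_unit_of_int: "\<not> int p dvd a \<Longrightarrow> padic_unit p (of_int a)"
  unfolding padic_unit_def using prime
  by (intro exI[of _ a] exI[of _ 1]) (auto simp: prime_gt_1_nat)

lemma padic_unit_of_nat: "0 < n \<Longrightarrow> n < p \<Longrightarrow> padic_unit p (of_nat n)"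
  using padic_unit_of_int[of "int n"] by (simp add: nat_dvd_not_less)

lemma padic_unit_uminus: "padic_unit p x \<Longrightarrow> padic_unit p (- x)"
  unfolding padic_unit_def by (metis dvd_minus_iff minus_divide_left of_int_minus)

lemma padic_unit_mult:
  assumes "padic_unit p x" "padic_unit p y"
  shows "padic_unit p (x * y)"
proof -
  obtain a b c d where x: "\<not> int p dvd a" "\<not> int p dvd b" "x = of_int a / of_int b"
    and y: "\<not> int p dvd c" "\<not> int p dvd d" "y = of_int c / of_int d"
    using assms unfolding padic_unit_def by blast
  have "x * y = of_int (a * c) / of_int (b * d)" using x y by simp
  then show ?thesis
    unfolding padic_unit_def using prime_not_dvd_mult[OF x(1) y(1)] prime_not_dvd_mult[OF x(2) y(2)] by blast
qed

lemma padic_unit_power: "padic_unit p x \<Longrightarrow> padic_unit p (x ^ n)"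
  using padic_unit_of_int[of 1] prime_gt_1_nat[OF prime]
  by (induction n) (auto simp: padic_unit_mult)

lemma padic_dvd_imp_int: "padic_dvd p e x \<Longrightarrow> padic_int p x"
  unfolding padic_dvd_def using padic_int_mult[OF padic_int_power[OF padic_int_of_nat]] by auto

lemma padic_dvd_0 [simp]: "padic_dvd p e 0"
  unfolding padic_dvd_def by (intro exI[of _ 0]) simp

lemma padic_dvd_add:
  assumes "padic_dvd p e x" "padic_dvd p e y"
  shows "padic_dvd p e (x + y)"
proof -
  obtain c d where "padic_int p c" "x = of_nat p ^ e * c" "padic_int p d" "y = of_nat p ^ e * d"
    using assms unfolding padic_dvd_def by blast
  then show ?thesis unfolding padic_dvd_def by (intro exI[of _ "c + d"]) (simp add: distrib_left padic_int_add)
qed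

lemma padic_dvd_mult:
  assumes "padic_dvd p e x" "padic_dvd p f y"
  shows "padic_dvd p (e + f) (x * y)"
proof -
  obtain c d where "padic_int p c" "x = of_nat p ^ e * c" "padic_int p d" "y = of_nat p ^ f * d"
    using assms unfolding padic_dvd_def by blast
  then show ?thesis
    unfolding padic_dvd_def by (intro exI[of _ "c * d"]) (simp add: power_add mult_ac padic_int_mult)
qed

lemma padic_dvd_mult_right: "padic_dvd p e x \<Longrightarrow> padic_int p y \<Longrightarrow> padic_dvd p e (x * y)"
  using padic_dvd_mult[of e x 0 y] by (simp add: padic_dvd_def)

lemma padic_dvd_mult_left: "padic_int p y \<Longrightarrow> padic_dvd p e x \<Longrightarrow> padic_dvd p e (y * x)"
  using padic_dvd_mult_right[of e x y] by (simp add: mult.commute)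

lemma padic_dvd_uminus: "padic_dvd p e x \<Longrightarrow> padic_dvd p e (- x)"
  using padic_dvd_mult_right[OF _ padic_int_of_int[of "-1"], of e x] by simp

lemma padic_dvd_diff: "padic_dvd p e x \<Longrightarrow> padic_dvd p e y \<Longrightarrow> padic_dvd p e (x - y)"
  using padic_dvd_add[of e x "- y"] padic_dvd_uminus[of e y] by simp

lemma padic_dvd_diff_trans:
  "padic_dvd p e (a - b) \<Longrightarrow> padic_dvd p e (b - c) \<Longrightarrow> padic_dvd p e (a - c)"
  using padic_dvd_add[of e "a - b" "b - c"] by simp

lemma padic_dvd_mult_diff:
  assumes "padic_dvd p e (x - x')" "padic_dvd p e (y - y')" "padic_int p y" "padic_int p x'"
  shows "padic_dvd p e (x * y - x' * y')"
proof -
  have "x * y - x' * y' = (x - x') * y + x' * (y - y')" by (simp add: algebra_simps)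
  then show ?thesis
    using padic_dvd_add[OF padic_dvd_mult_right[OF assms(1,3)] padic_dvd_mult_left[OF assms(4,2)]]
    by simp
qed

lemma padic_dvd_sum: "(\<And>i. i \<in> A \<Longrightarrow> padic_dvd p e (f i)) \<Longrightarrow> padic_dvd p e (sum f A)"
  by (induction A rule: infinite_finite_induct) (auto intro: padic_dvd_add)

lemma padic_dvd_2_mult: "padic_dvd p 1 a \<Longrightarrow> padic_dvd p 1 b \<Longrightarrow> padic_dvd p 2 (a * b)"
  using padic_dvd_mult[of 1 a 1 b] by (simp add: numeral_2_eq_2)

lemma padic_dvd_3_mult: "padic_dvd p 1 a \<Longrightarrow> padic_dvd p 2 b \<Longrightarrow> padic_dvd p 3 (a * b)"
  using padic_dvd_mult[of 1 a 2 b] by (simp add: numeral_3_eq_3 numeral_2_eq_2)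

lemma padic_dvd_mono:
  assumes "e \<le> f" "padic_dvd p f x"
  shows "padic_dvd p e x"
proof -
  obtain c where c: "padic_int p c" "x = of_nat p ^ f * c"
    using assms unfolding padic_dvd_def by auto
  obtain k where "f = e + k" using assms(1) le_Suc_ex by blast
  then have "x = of_nat p ^ e * (of_nat p ^ k * c)" using c by (simp add: power_add)
  moreover have "padic_int p (of_nat p ^ k * c)"
    using padic_int_mult[OF padic_int_power[OF padic_int_of_nat] c(1)] .
  ultimately show ?thesis unfolding padic_dvd_def by blast
qed

lemma padic_dvd_p: "padic_dvd p 1 (of_nat p)"
  unfolding padic_dvd_def by (intro exI[of _ 1]) simp

lemma padic_dvd_divide_p:
  assumes "padic_dvd p (Suc e) x"
  shows "padic_dvd p e (x / of_nat p)"
proof -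
  obtain c where "padic_int p c" "x = of_nat p ^ Suc e * c"
    using assms unfolding padic_dvd_def by auto
  moreover have "p \<noteq> 0" using prime by auto
  ultimately show ?thesis unfolding padic_dvd_def by auto
qed

lemma padic_dvd_p_mult: "padic_dvd p e x \<Longrightarrow> padic_dvd p (Suc e) (of_nat p * x)"
  using padic_dvd_mult[OF padic_dvd_p] by simp

lemma padic_dvd_mult_unit_cancel:
  assumes "padic_dvd p e (x * y)" "padic_unit p y"
  shows "padic_dvd p e x"
proof -
  have "x = (x * y) * (1 / y)" using padic_unit_nonzero[OF assms(2)] by simp
  then show ?thesis using padic_dvd_mult_right[OF assms(1) padic_int_inverse_unit[OF assms(2)]] by simp
qed

lemma padic_dvd_1_of_int_iff: "padic_dvd p 1 (of_int a) \<longleftrightarrow> int p dvd a"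
proof
  assume "int p dvd a"
  then obtain k where "a = int p * k" by auto
  then show "padic_dvd p 1 (of_int a)" unfolding padic_dvd_def by (intro exI[of _ "of_int k"]) simp
next
  assume "padic_dvd p 1 (of_int a)"
  then obtain c where c: "padic_int p c" "of_int a = of_nat p * c"
    unfolding padic_dvd_def by auto
  then obtain u v where uv: "\<not> int p dvd v" "c = of_int u / of_int v"
    unfolding padic_int_def by auto
  then have "v \<noteq> 0" by auto
  then have "of_int (a * v) = (of_int (int p * u) :: rat)" using c uv by (simp add: field_simps)
  then have "int p dvd a * v" by (simp only: of_int_eq_iff) simp
  then show "int p dvd a" using uv prime by (simp add: prime_dvd_mult_iff)
qed

end


section \<open>Congruences and residues of rationals\<close>

lemma rat_cong_intro:
  assumes "den \<noteq> 0" "coprime den n" "n dvd num" "a - b = of_int num / of_int den"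
  shows "rat_cong n a b"
proof -
  obtain n0 d0 where q: "quotient_of (a - b) = (n0, d0)" by (cases "quotient_of (a - b)") auto
  have d0: "d0 > 0" using quotient_of_denom_pos[OF q] .
  have cp: "coprime n0 d0" using quotient_of_coprime[OF q] .
  have "of_int n0 / of_int d0 = (of_int num / of_int den :: rat)" using quotient_of_div[OF q] assms(4) by simp
  hence "of_int (n0 * den) = (of_int (num * d0) :: rat)" using d0 assms(1) by (simp add: field_simps)
  hence eq: "n0 * den = num * d0" by (simp only: of_int_eq_iff)
  have "n dvd n0 * den" unfolding eq using assms(3) by simp
  hence "n dvd n0" using assms(2) by (simp add: coprime_dvd_mult_left_iff coprime_commute)
  moreover have "coprime d0 n" using coprime_divisors[OF dvd_refl \<open>n dvd n0\<close>, of d0] cp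
    by (simp add: coprime_commute)
  ultimately show ?thesis unfolding rat_cong_def q by simp
qed

lemma rat_cong_elim:
  assumes "rat_cong n a b"
  obtains num den where "den > 0" "coprime den n" "n dvd num" "a - b = of_int num / of_int den"
proof -
  obtain n0 d0 where q: "quotient_of (a - b) = (n0, d0)" by (cases "quotient_of (a - b)") auto
  show ?thesis using that[of d0 n0] assms quotient_of_denom_pos[OF q] quotient_of_div[OF q]
    unfolding rat_cong_def q by simp
qed

lemma rat_cong_if_padic_dvd:
  assumes pr: "prime p" and "padic_dvd p e (a - b)"
  shows "rat_cong (int p ^ e) a b"
proof -
  obtain c where c: "padic_int p c" "a - b = of_nat p ^ e * c" using assms unfolding padic_dvd_def by auto
  obtain u v where uv: "\<not> int p dvd v" "c = of_int u / of_int v" using c unfolding padic_int_def by auto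
  show ?thesis
  proof (rule rat_cong_intro[of v _ "int p ^ e * u"])
    show "v \<noteq> 0" using uv by auto
    show "coprime v (int p ^ e)" using prime_imp_power_coprime_int[of "int p" v e] pr uv by simp
    show "int p ^ e dvd int p ^ e * u" by simp
    show "a - b = of_int (int p ^ e * u) / of_int v" using c uv by simp
  qed
qed

lemma rat_rep_eqI:
  assumes "m > 0" "0 \<le> k" "k < m" "rat_cong m a (of_int k)"
  shows "rat_rep a m = k"
  unfolding rat_rep_def
proof (rule the_equality)
  show "0 \<le> k \<and> k < m \<and> rat_cong m a (rat_of_int k)" using assms by simp
  fix k' assume k': "0 \<le> k' \<and> k' < m \<and> rat_cong m a (rat_of_int k')"
  obtain n1 d1 where 1: "d1 > 0" "coprime d1 m" "m dvd n1" "a - of_int k = of_int n1 / of_int d1"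
    using rat_cong_elim[OF assms(4)] by blast
  obtain n2 d2 where 2: "d2 > 0" "coprime d2 m" "m dvd n2" "a - of_int k' = of_int n2 / of_int d2"
    using rat_cong_elim[of m a "of_int k'"] k' by blast
  have "of_int (k - k') = (of_int n2 / of_int d2 - of_int n1 / of_int d1 :: rat)" using 1 2 by simp
  hence "of_int ((k - k') * (d1 * d2)) = (of_int (n2 * d1 - n1 * d2) :: rat)" using 1 2
    by (simp add: field_simps)
  hence eq: "(k - k') * (d1 * d2) = n2 * d1 - n1 * d2" by (simp only: of_int_eq_iff)
  have "m dvd (k - k') * (d1 * d2)" unfolding eq using 1 2 by simp
  moreover have "coprime (d1 * d2) m" using 1 2 by simp
  ultimately have "m dvd k - k'" by (simp add: coprime_dvd_mult_left_iff coprime_commute)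
  then have "k mod m = k' mod m" by (simp add: mod_eq_dvd_iff)
  then show "k' = k" using assms k' by (simp add: mod_pos_pos_trivial)
qed

section \<open>The hypergeometric terms\<close>

definition hterm :: "rat \<Rightarrow> nat \<Rightarrow> rat" where
  "hterm x k = (\<Prod>j<k. (x + of_nat j) * (1 - x + of_nat j) / (of_nat j + 1)^2)"

definition harmonic :: "nat \<Rightarrow> rat" where
  "harmonic n = (\<Sum>i=1..n. 1 / of_nat i)"

lemma harmonic_0 [simp]: "harmonic 0 = 0"
  by (simp add: harmonic_def)

lemma harmonic_Suc: "harmonic (Suc n) = harmonic n + 1 / (of_nat n + 1)"
  by (simp add: harmonic_def)

lemma pochhammer_quotient_eq_hterm:
  "pochhammer x k * pochhammer (1 - x) k / (pochhammer 1 k)^2 = hterm x k"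
proof -
  have "(pochhammer (1::rat) k)^2 = (\<Prod>j<k. (of_nat j + 1)^2)"
    unfolding pochhammer_prod atLeast0LessThan by (simp add: prod_power_distrib add.commute)
  then show ?thesis
    unfolding hterm_def prod_dividef prod.distrib pochhammer_prod atLeast0LessThan
    by (simp add: add.commute)
qed

lemma hterm_0 [simp]: "hterm x 0 = 1"
  by (simp add: hterm_def)

lemma hterm_neg_nat_Suc:
  "hterm (- of_nat n) (Suc k) =
     hterm (- of_nat n) k * ((of_nat k - of_nat n) * (of_nat k + of_nat n + 1) / (of_nat k + 1)^2)"
  by (simp add: hterm_def algebra_simps)

lemma hterm_neg_nat_eq_0: "n < k \<Longrightarrow> hterm (- of_nat n) k = 0"
  unfolding hterm_def by (intro prod_zero) (auto intro!: bexI[of _ n])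

lemma hterm_neg_nat_Suc_param:
  "hterm (- of_nat (Suc n)) k * (of_nat (Suc n) - of_nat k) =
     hterm (- of_nat n) k * (of_nat (Suc n) + of_nat k)"
proof (induction k)
  case (Suc k)
  define A where "A = hterm (- of_nat (Suc n)) k"
  define B where "B = hterm (- of_nat n) k"
  have IH: "A * (of_nat n + 1 - of_nat k) = B * (of_nat n + 1 + of_nat k)"
    using Suc unfolding A_def B_def by (simp add: ac_simps)
  have "hterm (- of_nat (Suc n)) (Suc k) * (of_nat (Suc n) - of_nat (Suc k)) =
      - (A * (of_nat n + 1 - of_nat k)) * (of_nat k + of_nat n + 2) * (of_nat n - of_nat k) / (of_nat k + 1)^2"
    unfolding hterm_neg_nat_Suc[of "Suc n"] A_def[symmetric] by (simp add: algebra_simps)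
  also have "\<dots> = - (B * (of_nat n + 1 + of_nat k)) * (of_nat k + of_nat n + 2) * (of_nat n - of_nat k) / (of_nat k + 1)^2"
    using IH by simp
  also have "\<dots> = hterm (- of_nat n) (Suc k) * (of_nat (Suc n) + of_nat (Suc k))"
    unfolding hterm_neg_nat_Suc B_def[symmetric] by (simp add: algebra_simps)
  finally show ?case .
qed simp



lemma sum_hterm_neg_nat_truncate:
  "n \<le> N \<Longrightarrow> (\<Sum>k=1..N. hterm (- of_nat n) k * c k) = (\<Sum>k=1..n. hterm (- of_nat n) k * c k)"
  by (rule sum.mono_neutral_cong_right) (auto simp: hterm_neg_nat_eq_0)

lemma hterm_neg_nat_telescope:
  assumes "n > 0"
  shows "(\<Sum>k\<le>K. hterm (- of_nat n) k / (of_nat n + of_nat k)) =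
           hterm (- of_nat n) K * (of_nat n - of_nat K) / (of_nat n)^2"
proof (induction K)
  case (Suc K)
  define B where "B = hterm (- of_nat n) K"
  define N where "N = (of_nat n :: rat)"
  define L where "L = (of_nat K :: rat)"
  have nz: "N \<noteq> 0" "L + 1 \<noteq> 0" "N + L + 1 \<noteq> 0"
    using assms unfolding N_def L_def by (simp_all add: add.assoc flip: of_nat_Suc)
  have "(\<Sum>k\<le>Suc K. hterm (- of_nat n) k / (of_nat n + of_nat k)) =
      B * (N - L) / N^2 + B * ((L - N) * (L + N + 1) / (L + 1)^2) / (N + L + 1)"
    using Suc unfolding B_def N_def L_def by (simp add: hterm_neg_nat_Suc add.assoc)
  also have "\<dots> = B * (N - L) / N^2 + B * ((L - N) / (L + 1)^2)"
    using nz by (simp add: add.commute add.left_commute)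
  also have "\<dots> = B * ((L - N) * (L + N + 1) / (L + 1)^2) * (N - (L + 1)) / N^2"
    using nz by (simp add: field_simps) (simp add: algebra_simps power2_eq_square)
  also have "\<dots> = hterm (- of_nat n) (Suc K) * (of_nat n - of_nat (Suc K)) / (of_nat n)^2"
    unfolding hterm_neg_nat_Suc B_def N_def L_def by simp
  finally show ?case .
qed (use assms in \<open>simp add: power2_eq_square\<close>)

lemma sum_hterm_neg_nat_div_add:
  assumes "n > 0"
  shows "(\<Sum>k=1..n. hterm (- of_nat n) k / (of_nat n + of_nat k)) = - 1 / of_nat n"
proof -
  have "(\<Sum>k\<le>n. hterm (- of_nat n) k / (of_nat n + of_nat k)) = 0"
    using hterm_neg_nat_telescope[OF assms, of n] by simp
  moreover have "(\<Sum>k\<le>n. hterm (- of_nat n) k / (of_nat n + of_nat k)) =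
      1 / of_nat n + (\<Sum>k=1..n. hterm (- of_nat n) k / (of_nat n + of_nat k))"
    by (simp add: atMost_atLeast0 sum.atLeast_Suc_atMost)
  ultimately show ?thesis by (simp add: field_simps)
qed

lemma hterm_neg_nat_Suc_diff:
  "hterm (- of_nat (Suc n)) k - hterm (- of_nat n) k =
     2 * of_nat k * hterm (- of_nat (Suc n)) k / (of_nat (Suc n) + of_nat k)"
proof -
  have nz: "(of_nat (Suc n) + of_nat k :: rat) \<noteq> 0"
    by (metis add_is_0 of_nat_add of_nat_eq_0_iff old.nat.distinct(2))
  have "hterm (- of_nat n) k =
      hterm (- of_nat (Suc n)) k * (of_nat (Suc n) - of_nat k) / (of_nat (Suc n) + of_nat k)"
    using hterm_neg_nat_Suc_param[of n k] nz by (simp add: field_simps)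
  then show ?thesis using nz by (simp add: field_simps)
qed

lemma sum_hterm_neg_nat_div: "(\<Sum>k=1..n. hterm (- of_nat n) k / of_nat k) = - 2 * harmonic n"
proof (induction n)
  case (Suc n)
  have "(\<Sum>k=1..Suc n. hterm (- of_nat (Suc n)) k / of_nat k) -
        (\<Sum>k=1..n. hterm (- of_nat n) k / of_nat k) =
      (\<Sum>k=1..Suc n. (hterm (- of_nat (Suc n)) k - hterm (- of_nat n) k) / of_nat k)"
    using sum_hterm_neg_nat_truncate[of n "Suc n" "\<lambda>k. 1 / of_nat k"]
    by (simp add: sum_subtractf diff_divide_distrib)
  also have "\<dots> = 2 * (\<Sum>k=1..Suc n. hterm (- of_nat (Suc n)) k / (of_nat (Suc n) + of_nat k))"
    unfolding sum_distrib_left by (rule sum.cong) (auto simp del: of_nat_Suc simp add: hterm_neg_nat_Suc_diff)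
  also have "\<dots> = - 2 / (of_nat n + 1)"
    using sum_hterm_neg_nat_div_add[of "Suc n"] by simp
  finally show ?case using Suc by (simp add: harmonic_Suc algebra_simps)
qed simp

lemma sum_hterm_neg_nat_div_square:
  "(\<Sum>k=1..n. hterm (- of_nat n) k / (of_nat k)^2) = - 2 * (harmonic n)^2"
proof (induction n)
  case (Suc n)
  define N where "N = (of_nat (Suc n) :: rat)"
  define S where "S = (\<Sum>k=1..Suc n. hterm (- of_nat (Suc n)) k / (of_nat k)^2)"
  have N: "N \<noteq> 0" "harmonic (Suc n) = harmonic n + 1 / N"
    unfolding N_def by (simp_all add: harmonic_Suc)
  have "S - (\<Sum>k=1..n. hterm (- of_nat n) k / (of_nat k)^2) =
      (\<Sum>k=1..Suc n. (hterm (- of_nat (Suc n)) k - hterm (- of_nat n) k) / (of_nat k)^2)"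
    unfolding S_def using sum_hterm_neg_nat_truncate[of n "Suc n" "\<lambda>k. 1 / (of_nat k)^2"]
    by (simp add: sum_subtractf diff_divide_distrib)
  also have "\<dots> = (2 / N) * (\<Sum>k=1..Suc n. hterm (- of_nat (Suc n)) k / of_nat k
                     - hterm (- of_nat (Suc n)) k / (N + of_nat k))"
    unfolding sum_distrib_left
  proof (rule sum.cong)
    fix k assume "k \<in> {1..Suc n}"
    then have nz: "(of_nat k :: rat) \<noteq> 0" "N + of_nat k \<noteq> 0"
      unfolding N_def by (simp_all add: add_pos_pos flip: of_nat_add)
    define F where "F = hterm (- of_nat (Suc n)) k"
    have D: "hterm (- of_nat (Suc n)) k - hterm (- of_nat n) k = 2 * of_nat k * F / (N + of_nat k)"
      unfolding F_def N_def by (rule hterm_neg_nat_Suc_diff)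
    show "(hterm (- of_nat (Suc n)) k - hterm (- of_nat n) k) / (of_nat k)^2 =
        2 / N * (hterm (- of_nat (Suc n)) k / of_nat k - hterm (- of_nat (Suc n)) k / (N + of_nat k))"
      unfolding D unfolding F_def[symmetric] using nz N
      by (simp add: divide_simps) (simp add: algebra_simps power2_eq_square)
  qed simp
  also have "\<dots> = (2 / N) * (- 2 * harmonic (Suc n) + 1 / N)"
    using sum_hterm_neg_nat_div[of "Suc n"] sum_hterm_neg_nat_div_add[of "Suc n"]
    unfolding N_def by (simp add: sum_subtractf)
  finally have "S = - 2 * (harmonic n)^2 + (2 / N) * (- 2 * (harmonic n + 1 / N) + 1 / N)"
    using Suc N by simp
  then have "S = - 2 * (harmonic n + 1 / N)^2"
    using N by (simp add: divide_simps) (simp add: algebra_simps power2_eq_square)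
  then show ?case unfolding S_def N by simp
qed simp

section \<open>Sums of inverse powers of the nonzero residues\<close>

definition inv_power_sum :: "nat \<Rightarrow> nat \<Rightarrow> rat" where
  "inv_power_sum p k = (\<Sum>c\<in>{1..int p - 1}. 1 / (of_int c)^k)"

context
  fixes p :: nat
  assumes prime: "prime p"
begin

lemma not_dvd_residue: "c \<in> {1..int p - 1} \<Longrightarrow> \<not> int p dvd c"
  using zdvd_imp_le by fastforce

lemma padic_dvd_inverse_power_diff:
  assumes "\<not> int p dvd a" "\<not> int p dvd b" "int p dvd a - b"
  shows "padic_dvd p 1 (1 / (of_int a)^k - 1 / (of_int b)^k)"
proof -
  have "[a = b] (mod int p)" using assms(3) by (simp add: cong_iff_dvd_diff)
  then have "[b ^ k = a ^ k] (mod int p)" by (simp add: cong_pow cong_sym)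
  then have "padic_dvd p 1 (of_int (b ^ k - a ^ k))"
    by (subst padic_dvd_1_of_int_iff[OF prime]) (simp add: cong_iff_dvd_diff)
  moreover have "padic_unit p (of_int (a ^ k * b ^ k))"
    using assms(1,2) prime_dvd_power[of "int p"] prime
    by (intro padic_unit_of_int) (auto simp: prime_dvd_mult_iff)
  moreover have "1 / (of_int a)^k - 1 / (of_int b)^k =
      of_int (b ^ k - a ^ k) * (1 / (of_int (a ^ k * b ^ k)) :: rat)"
    using assms(1,2) by (subgoal_tac "a \<noteq> 0 \<and> b \<noteq> 0") (auto simp: field_simps)
  ultimately show ?thesis
    using padic_dvd_mult_right[OF prime] padic_int_inverse_unit[OF prime] by metis
qed

lemma padic_dvd_sum_inverse_power_residues:
  assumes "finite J" and inj: "inj_on (\<lambda>j. f j mod int p) J"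
    and not_dvd: "\<forall>j\<in>J. \<not> int p dvd f j" and card: "card J = p - 1"
  shows "padic_dvd p 1 ((\<Sum>j\<in>J. 1 / (of_int (f j))^k) - inv_power_sum p k)"
proof -
  have sub: "(\<lambda>j. f j mod int p) ` J \<subseteq> {1..int p - 1}"
  proof
    fix c assume "c \<in> (\<lambda>j. f j mod int p) ` J"
    then obtain j where j: "j \<in> J" "c = f j mod int p" by auto
    then have "c \<noteq> 0" using not_dvd by (auto simp: dvd_eq_mod_eq_0)
    moreover have "0 \<le> c" "c < int p" using j prime_gt_1_nat[OF prime] by auto
    ultimately show "c \<in> {1..int p - 1}" by auto
  qed
  have img: "(\<lambda>j. f j mod int p) ` J = {1..int p - 1}"
    by (rule card_subset_eq) (use sub card card_image[OF inj] in auto)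
  have "(\<Sum>j\<in>J. 1 / (of_int (f j mod int p))^k) = inv_power_sum p k"
    unfolding inv_power_sum_def img[symmetric] sum.reindex[OF inj] by simp
  moreover have "padic_dvd p 1 ((\<Sum>j\<in>J. 1 / (of_int (f j))^k) - (\<Sum>j\<in>J. 1 / (of_int (f j mod int p))^k))"
    unfolding sum_subtractf[symmetric]
    by (intro padic_dvd_sum[OF prime] padic_dvd_inverse_power_diff)
       (use not_dvd in \<open>auto simp: dvd_eq_mod_eq_0 minus_mod_eq_mult_div\<close>)
  ultimately show ?thesis by simp
qed

text \<open>Doubling permutes the nonzero residues, so \<open>(1 - 2\<^sup>k) \<cdot> inv_power_sum p k \<equiv> 0\<close>.\<close>

lemma padic_dvd_inv_power_sum:
  assumes "p > 2" and "\<not> int p dvd (2 ^ k - 1)"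
  shows "padic_dvd p 1 (inv_power_sum p k)"
proof -
  have not_dvd_2: "\<not> int p dvd 2"
    using assms(1) by (auto dest: zdvd_imp_le)
  have inj: "inj_on (\<lambda>c. 2 * c mod int p) {1..int p - 1}"
  proof (rule inj_onI)
    fix a b assume a: "a \<in> {1..int p - 1}" and b: "b \<in> {1..int p - 1}"
      and "2 * a mod int p = 2 * b mod int p"
    then have "int p dvd 2 * (a - b)" by (metis mod_eq_dvd_iff right_diff_distrib)
    then have "[a = b] (mod int p)"
      using prime_dvd_multD[of "int p" 2 "a - b"] prime not_dvd_2 by (simp add: cong_iff_dvd_diff)
    then show "a = b" using a b by (simp add: cong_def)
  qed
  have "\<forall>c\<in>{1..int p - 1}. \<not> int p dvd 2 * c"
    using not_dvd_residue not_dvd_2 prime by (simp add: prime_dvd_mult_iff)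
  then have "padic_dvd p 1 ((\<Sum>c\<in>{1..int p - 1}. 1 / (of_int (2 * c))^k) - inv_power_sum p k)"
    by (intro padic_dvd_sum_inverse_power_residues[OF _ inj]) auto
  moreover have "(\<Sum>c\<in>{1..int p - 1}. 1 / (of_int (2 * c))^k) = inv_power_sum p k / 2 ^ k"
    unfolding inv_power_sum_def sum_divide_distrib by (simp add: power_mult_distrib mult.commute)
  then have "(\<Sum>c\<in>{1..int p - 1}. 1 / (of_int (2 * c))^k) - inv_power_sum p k =
      inv_power_sum p k * ((1 - 2^k) / 2^k)"
    by (simp add: field_simps)
  moreover have "padic_unit p ((1 - 2^k) / 2^k)"
  proof -
    have "(1 - 2^k) / 2^k = (of_int (- (2^k - 1)) / of_int (2^k) :: rat)" by simp
    moreover have "\<not> int p dvd - (2^k - 1)"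
      using assms(2) dvd_minus_iff by blast
    moreover have "\<not> int p dvd 2^k"
      using not_dvd_2 prime_dvd_power[of "int p" 2 k] prime by auto
    ultimately show ?thesis unfolding padic_unit_def by blast
  qed
  ultimately show ?thesis using padic_dvd_mult_unit_cancel[OF prime] by metis
qed

end

section \<open>Secant congruences for polynomials\<close>

text \<open>For \<open>d, h \<in> p\<int>\<^sub>(\<^sub>p\<^sub>)\<close>, \<open>h \<noteq> 0\<close>: \<open>F\<close> is \<open>p\<close>-integral near \<open>0\<close> and \<open>F d\<close> agrees modulo \<open>p\<^sup>2\<close>
  with the secant of \<open>F\<close> through \<open>0\<close> and \<open>h\<close>. This class of functions contains the constants and
  the identity and is closed under sums and products, hence contains every polynomial with
  \<open>p\<close>-integral coefficients.\<close>

definition secant_cong :: "nat \<Rightarrow> rat \<Rightarrow> rat \<Rightarrow> (rat \<Rightarrow> rat) \<Rightarrow> bool" where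
  "secant_cong p d h F \<longleftrightarrow>
     padic_int p (F 0) \<and> padic_dvd p 1 (F d - F 0) \<and> padic_dvd p 1 (F h - F 0) \<and>
     padic_int p ((F h - F 0) / h) \<and> padic_dvd p 2 (F d - F 0 - d * ((F h - F 0) / h))"

context
  fixes p :: nat and d h :: rat
  assumes prime: "prime p" and d: "padic_dvd p 1 d" and h: "padic_dvd p 1 h" "h \<noteq> 0"
begin

lemma secant_cong_const: "padic_int p c \<Longrightarrow> secant_cong p d h (\<lambda>_. c)"
  unfolding secant_cong_def using prime by simp

lemma secant_cong_id: "secant_cong p d h (\<lambda>z. z)"
  unfolding secant_cong_def using prime d h by simp

lemma secant_cong_add:
  assumes "secant_cong p d h F" "secant_cong p d h G"
  shows "secant_cong p d h (\<lambda>z. F z + G z)"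
proof -
  have "F x + G x - (F 0 + G 0) = (F x - F 0) + (G x - G 0)" for x
    by simp
  moreover have slope: "(F h + G h - (F 0 + G 0)) / h = (F h - F 0) / h + (G h - G 0) / h"
    by (simp add: diff_divide_distrib add_divide_distrib)
  moreover have "F d + G d - (F 0 + G 0) - d * ((F h + G h - (F 0 + G 0)) / h) =
      (F d - F 0 - d * ((F h - F 0) / h)) + (G d - G 0 - d * ((G h - G 0) / h))"
    unfolding slope by (simp add: algebra_simps)
  ultimately show ?thesis
    using assms padic_int_add[OF prime] padic_dvd_add[OF prime] unfolding secant_cong_def by metis
qed

lemma secant_cong_mult:
  assumes F: "secant_cong p d h F" and G: "secant_cong p d h G"
  shows "secant_cong p d h (\<lambda>z. F z * G z)"
proof -
  define DF DG where "DF = (F h - F 0) / h" and "DG = (G h - G 0) / h"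
  have F': "padic_int p (F 0)" "padic_dvd p 1 (F d - F 0)" "padic_dvd p 1 (F h - F 0)"
      "padic_int p DF" "padic_dvd p 2 (F d - F 0 - d * DF)"
    using F unfolding secant_cong_def DF_def by auto
  have G': "padic_int p (G 0)" "padic_dvd p 1 (G d - G 0)" "padic_dvd p 1 (G h - G 0)"
      "padic_int p DG" "padic_dvd p 2 (G d - G 0 - d * DG)"
    using G unfolding secant_cong_def DG_def by auto
  have int_F: "padic_int p (F d)" "padic_int p (F h)"
    using padic_int_add[OF prime F'(1) padic_dvd_imp_int[OF prime F'(2)]]
      padic_int_add[OF prime F'(1) padic_dvd_imp_int[OF prime F'(3)]] by simp_all
  have slope: "(F h * G h - F 0 * G 0) / h = F h * DG + G 0 * DF"
    unfolding DF_def DG_def using h(2) by (simp add: field_simps)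
  have "F d * G d - F 0 * G 0 - d * (F h * DG + G 0 * DF) =
      F d * (G d - G 0 - d * DG) + G 0 * (F d - F 0 - d * DF) + (d * DG) * (F d - F h)"
    by (simp add: algebra_simps)
  moreover have "padic_dvd p 2 ((d * DG) * (F d - F h))"
    using padic_dvd_2_mult[OF prime padic_dvd_mult_right[OF prime d G'(4)]
        padic_dvd_diff[OF prime F'(2) F'(3)]] by simp
  ultimately have "padic_dvd p 2 (F d * G d - F 0 * G 0 - d * ((F h * G h - F 0 * G 0) / h))"
    unfolding slope using F'(5) G'(5) int_F G'(1) prime
    by (metis padic_dvd_add padic_dvd_mult_left)
  moreover have "F x * G x - F 0 * G 0 = F x * (G x - G 0) + G 0 * (F x - F 0)" for x
    by (simp add: algebra_simps)
  ultimately show ?thesis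
    unfolding secant_cong_def slope using F' G' int_F prime
    by (metis padic_dvd_add padic_dvd_mult_left padic_int_add padic_int_mult)
qed

lemma secant_cong_sum:
  "(\<And>i. i \<in> A \<Longrightarrow> secant_cong p d h (f i)) \<Longrightarrow> secant_cong p d h (\<lambda>z. \<Sum>i\<in>A. f i z)"
  by (induction A rule: infinite_finite_induct)
     (simp_all add: secant_cong_const[of 0, simplified] prime secant_cong_add)

lemma secant_cong_prod:
  "(\<And>i. i \<in> A \<Longrightarrow> secant_cong p d h (f i)) \<Longrightarrow> secant_cong p d h (\<lambda>z. \<Prod>i\<in>A. f i z)"
  by (induction A rule: infinite_finite_induct)
     (simp_all add: secant_cong_const[of 1, simplified] prime secant_cong_mult)

lemma secant_cong_affine: "padic_int p a \<Longrightarrow> padic_int p b \<Longrightarrow> secant_cong p d h (\<lambda>z. a * z + b)"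
  using secant_cong_add[OF secant_cong_mult[OF secant_cong_const secant_cong_id] secant_cong_const]
  by simp

end

text \<open>Since \<open>(x + j)(1 - x + j) = (x + s)(1 + s - x) + (j - s)(j + s + 1)\<close>, for every shift \<open>s\<close> the term
  \<open>hterm x k\<close> is a polynomial in \<open>(x + s)(1 + s - x)\<close>.\<close>

definition hterm_poly :: "nat \<Rightarrow> nat \<Rightarrow> rat \<Rightarrow> rat" where
  "hterm_poly s k z = (\<Prod>j<k. (z + (of_nat j - of_nat s) * (of_nat j + of_nat s + 1)) / (of_nat j + 1)^2)"

lemma hterm_eq_hterm_poly: "hterm x k = hterm_poly s k ((x + of_nat s) * (1 + of_nat s - x))"
  unfolding hterm_def hterm_poly_def by (rule prod.cong) (simp_all add: algebra_simps)

lemma hterm_poly_at_node: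
  "hterm_poly s k ((of_nat s - of_nat n) * (of_nat s + of_nat n + 1)) = hterm (- of_nat n) k"
  using hterm_eq_hterm_poly[of "- of_nat n" k s] by (simp add: algebra_simps)

lemma secant_cong_hterm_poly_sum:
  assumes "prime p" "padic_dvd p 1 d" "padic_dvd p 1 h" "h \<noteq> 0"
    and c: "\<And>k. k \<in> {1..p-1} \<Longrightarrow> padic_int p (c k)"
  shows "secant_cong p d h (\<lambda>z. \<Sum>k=1..p-1. c k * hterm_poly s k z)"
proof (intro secant_cong_sum[OF assms(1-4)] secant_cong_mult[OF assms(1-4)]
    secant_cong_const[OF assms(1-4) c])
  fix k assume k: "k \<in> {1..p-1}"
  have eq: "hterm_poly s k = (\<lambda>z. \<Prod>j<k. 1 / (of_nat j + 1)^2 * z +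
                  (of_nat j - of_nat s) * (of_nat j + of_nat s + 1) * (1 / (of_nat j + 1)^2))"
    unfolding hterm_poly_def by (intro ext prod.cong) (simp_all add: add_divide_distrib)
  show "secant_cong p d h (hterm_poly s k)"
    unfolding eq
  proof (intro secant_cong_prod[OF assms(1-4)] secant_cong_affine[OF assms(1-4)])
    fix j assume "j \<in> {..<k}"
    then have "padic_int p (1 / (of_nat (j + 1))^2)"
      using padic_unit_power[OF assms(1) padic_unit_of_nat[OF assms(1), of "j + 1"], of 2] k
      by (intro padic_int_inverse_unit[OF assms(1)]) simp
    then show inv: "padic_int p (1 / (of_nat j + 1)^2)"
      by (simp add: add.commute)
    have "padic_int p ((of_nat j - of_nat s) * (of_nat j + of_nat s + 1))"
      using assms(1) by (intro padic_int_mult padic_int_diff padic_int_add) simp_all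
    then show "padic_int p ((of_nat j - of_nat s) * (of_nat j + of_nat s + 1) * (1 / (of_nat j + 1)^2))"
      using padic_int_mult[OF assms(1) _ inv] by blast
  qed
qed (assumption)

section \<open>Products close to 1 modulo \<open>p\<^sup>3\<close>\<close>

context
  fixes p :: nat
  assumes prime: "prime p" and odd: "p \<noteq> 2"
begin

lemma padic_int_half: "padic_int p (1 / 2)"
proof -
  have "\<not> int p dvd 2"
  proof
    assume "int p dvd 2"
    then have "int p \<le> 2" by (rule zdvd_imp_le) simp
    then show False using prime_ge_2_nat[OF prime] odd by simp
  qed
  then show ?thesis
    using padic_int_inverse_unit[OF prime padic_unit_of_int[OF prime, of 2]] by simp
qed

lemma padic_dvd_prod_one_plus:
  assumes "finite J" and "\<And>j. j \<in> J \<Longrightarrow> padic_dvd p 1 (v j)"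
  shows "padic_dvd p 3 ((\<Prod>j\<in>J. 1 + v j) -
           (1 + (\<Sum>j\<in>J. v j) + ((\<Sum>j\<in>J. v j)^2 - (\<Sum>j\<in>J. (v j)^2)) / 2))"
  using assms
proof (induction J rule: finite_induct)
  case (insert a J)
  define V1 V2 P where "V1 = (\<Sum>j\<in>J. v j)" and "V2 = (\<Sum>j\<in>J. (v j)^2)" and "P = (\<Prod>j\<in>J. 1 + v j)"
  have IH: "padic_dvd p 3 (P - (1 + V1 + (V1^2 - V2) / 2))"
    using insert unfolding V1_def V2_def P_def by simp
  have va: "padic_dvd p 1 (v a)" using insert by simp
  have V1: "padic_dvd p 1 V1"
    unfolding V1_def using insert by (intro padic_dvd_sum[OF prime]) simp
  have V2: "padic_dvd p 2 V2"
    unfolding V2_def using insert padic_dvd_2_mult[OF prime]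
    by (intro padic_dvd_sum[OF prime]) (simp add: power2_eq_square)
  have "(\<Prod>j\<in>insert a J. 1 + v j) - (1 + (\<Sum>j\<in>insert a J. v j) +
        ((\<Sum>j\<in>insert a J. v j)^2 - (\<Sum>j\<in>insert a J. (v j)^2)) / 2)
      = (P - (1 + V1 + (V1^2 - V2) / 2)) * (1 + v a) + v a * ((V1 * V1 - V2) * (1 / 2))"
    using insert unfolding P_def V1_def V2_def by (simp add: field_simps power2_eq_square)
  moreover have "padic_dvd p 3 ((P - (1 + V1 + (V1^2 - V2) / 2)) * (1 + v a))"
    using padic_dvd_mult_right[OF prime IH] padic_dvd_imp_int[OF prime va] prime
    by (simp add: padic_int_add)
  moreover have "padic_dvd p 3 (v a * ((V1 * V1 - V2) * (1 / 2)))"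
    using padic_dvd_3_mult[OF prime va padic_dvd_mult_right[OF prime
          padic_dvd_diff[OF prime padic_dvd_2_mult[OF prime V1 V1] V2] padic_int_half]] .
  ultimately show ?case using padic_dvd_add[OF prime] by simp
qed (simp add: padic_dvd_0[OF prime])

lemma padic_dvd_prod_one_plus_divide:
  assumes "finite J" and w: "padic_dvd p 1 w" and b: "\<And>j. j \<in> J \<Longrightarrow> padic_unit p (b j)"
    and B1: "padic_dvd p 1 (\<Sum>j\<in>J. 1 / b j)" and B2: "padic_dvd p 1 (\<Sum>j\<in>J. 1 / (b j)^2)"
  shows "padic_dvd p 3 ((\<Prod>j\<in>J. 1 + w / b j) - (1 + w * (\<Sum>j\<in>J. 1 / b j)))"
proof -
  define S1 S2 where "S1 = (\<Sum>j\<in>J. 1 / b j)" and "S2 = (\<Sum>j\<in>J. 1 / (b j)^2)"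
  have "padic_dvd p 1 (w / b j)" if "j \<in> J" for j
    using padic_dvd_mult_right[OF prime w padic_int_inverse_unit[OF prime b[OF that]]] by simp
  moreover have "(\<Sum>j\<in>J. w / b j) = w * S1" "(\<Sum>j\<in>J. (w / b j)^2) = w * (w * S2)"
    unfolding S1_def S2_def by (simp_all add: sum_distrib_left power_divide power2_eq_square)
  ultimately have "padic_dvd p 3 ((\<Prod>j\<in>J. 1 + w / b j) - (1 + w * S1 + ((w * S1)^2 - w * (w * S2)) / 2))"
    using padic_dvd_prod_one_plus[OF assms(1), of "\<lambda>j. w / b j"] by simp
  moreover have "padic_dvd p 3 ((w * (w * S1 * S1) - w * (w * S2)) * (1 / 2))"
    using padic_dvd_3_mult[OF prime w padic_dvd_mult_right[OF prime padic_dvd_2_mult[OF prime w B1]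
          padic_dvd_imp_int[OF prime B1]]]
      padic_dvd_3_mult[OF prime w padic_dvd_2_mult[OF prime w B2]]
    unfolding S1_def S2_def
    by (intro padic_dvd_mult_right[OF prime padic_dvd_diff[OF prime] padic_int_half]) (simp_all add: mult.assoc)
  ultimately have "padic_dvd p 3 (((\<Prod>j\<in>J. 1 + w / b j) - (1 + w * S1 + ((w * S1)^2 - w * (w * S2)) / 2))
      + (w * (w * S1 * S1) - w * (w * S2)) * (1 / 2))"
    using padic_dvd_add[OF prime] by blast
  moreover have "((\<Prod>j\<in>J. 1 + w / b j) - (1 + w * S1 + ((w * S1)^2 - w * (w * S2)) / 2))
      + (w * (w * S1 * S1) - w * (w * S2)) * (1 / 2) = (\<Prod>j\<in>J. 1 + w / b j) - (1 + w * S1)"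
    by (simp add: field_simps power2_eq_square)
  ultimately show ?thesis unfolding S1_def by argo
qed

lemma padic_unit_of_nat_diff_p:
  assumes "0 < i" "i < p"
  shows "padic_unit p (of_nat i - of_nat p)"
proof -
  have "\<not> int p dvd (int i - int p)"
  proof
    assume "int p dvd (int i - int p)"
    then have "p dvd i" by (metis dvd_diff_commute dvd_refl dvd_diff zdvd_zdiffD int_dvd_int_iff)
    then show False using assms by (simp add: nat_dvd_not_less)
  qed
  then show ?thesis using padic_unit_of_int[OF prime] by fastforce
qed

lemma padic_int_harmonic: "s < p \<Longrightarrow> padic_int p (harmonic s)"
  unfolding harmonic_def
  by (intro padic_int_sum[OF prime] padic_int_inverse_unit[OF prime] padic_unit_of_nat[OF prime]) auto

lemma reflection_factor_cong:
  assumes "0 < i" "i < p"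
  defines "w \<equiv> of_nat p / of_nat i"
  shows "padic_dvd p 3 ((of_nat p + of_nat i) / (of_nat i - of_nat p) - (1 + 2 * w + 2 * w^2))"
proof -
  have i: "padic_unit p (of_nat i)" and ip: "padic_unit p (of_nat i - of_nat p)"
    using assms padic_unit_of_nat[OF prime] padic_unit_of_nat_diff_p by auto
  have w1: "padic_dvd p 1 w"
    unfolding w_def using padic_dvd_mult_right[OF prime padic_dvd_p[OF prime]
        padic_int_inverse_unit[OF prime i]] by simp
  define c where "c = 2 * of_nat i / (of_nat i - of_nat p :: rat)"
  have "(of_nat p + of_nat i) / (of_nat i - of_nat p) - (1 + 2 * w + 2 * w^2) = w * (w * w) * c"
    using padic_unit_nonzero[OF prime i] padic_unit_nonzero[OF prime ip]
    unfolding w_def c_def by (simp add: field_simps power2_eq_square)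
  moreover have "padic_int p c"
    unfolding c_def using prime padic_int_inverse_unit[OF prime ip]
    by (metis padic_int_mult padic_int_numeral padic_int_of_nat times_divide_eq_right mult_1_right)
  ultimately show ?thesis
    using padic_dvd_mult_right[OF prime padic_dvd_3_mult[OF prime w1 padic_dvd_2_mult[OF prime w1 w1]]]
    by simp
qed

text \<open>\<open>1 + 2a + 2a\<^sup>2\<close> is \<open>exp(2a)\<close> truncated after the quadratic term.\<close>

lemma padic_dvd_truncated_exp_mult:
  assumes a: "padic_dvd p 1 a" and b: "padic_dvd p 1 b"
  shows "padic_dvd p 3 ((1 + 2 * a + 2 * a^2) * (1 + 2 * b + 2 * b^2) - (1 + 2 * (a + b) + 2 * (a + b)^2))"
proof -
  have "(1 + 2 * a + 2 * a^2) * (1 + 2 * b + 2 * b^2) - (1 + 2 * (a + b) + 2 * (a + b)^2)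
      = 4 * (a * (b * b)) + 4 * (b * (a * a)) + 4 * (a * (a * (b * b)))"
    by (simp add: algebra_simps power2_eq_square)
  moreover have "padic_dvd p 3 (4 * (a * (b * b)) + 4 * (b * (a * a)) + 4 * (a * (a * (b * b))))"
    using padic_dvd_3_mult[OF prime a padic_dvd_2_mult[OF prime b b]]
      padic_dvd_3_mult[OF prime b padic_dvd_2_mult[OF prime a a]]
      padic_dvd_mult_left[OF prime padic_dvd_imp_int[OF prime a]
        padic_dvd_3_mult[OF prime a padic_dvd_2_mult[OF prime b b]]] prime
    by (simp add: padic_dvd_add padic_dvd_mult_left)
  ultimately show ?thesis by simp
qed

lemma prod_reflection_cong:
  "s < p \<Longrightarrow> padic_dvd p 3 ((\<Prod>i=1..s. (of_nat p + of_nat i) / (of_nat i - of_nat p)) -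
     (1 + 2 * of_nat p * harmonic s + 2 * (of_nat p)^2 * (harmonic s)^2))"
proof (induction s)
  case (Suc s)
  define w where "w = (of_nat p / of_nat (Suc s) :: rat)"
  define A where "A = of_nat p * harmonic s"
  define P where "P = (\<Prod>i=1..s. (of_nat p + of_nat i) / (of_nat i - of_nat p) :: rat)"
  define F where "F = ((of_nat p + of_nat (Suc s)) / (of_nat (Suc s) - of_nat p) :: rat)"
  have w1: "padic_dvd p 1 w"
    unfolding w_def using padic_dvd_mult_right[OF prime padic_dvd_p[OF prime]
        padic_int_inverse_unit[OF prime padic_unit_of_nat[OF prime, of "Suc s"]]] Suc.prems by simp
  have A1: "padic_dvd p 1 A"
    unfolding A_def using padic_dvd_mult_right[OF prime padic_dvd_p[OF prime]
        padic_int_harmonic] Suc.prems by simp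
  have "padic_dvd p 3 (P - (1 + 2 * A + 2 * A^2))"
    using Suc unfolding P_def A_def by (simp add: power_mult_distrib mult.assoc)
  moreover have "padic_dvd p 3 (F - (1 + 2 * w + 2 * w^2))"
    unfolding F_def w_def using reflection_factor_cong[of "Suc s"] Suc.prems by simp
  moreover have "padic_int p F"
    unfolding F_def using prime Suc.prems
    by (metis padic_int_mult padic_int_of_nat padic_int_add padic_int_inverse_unit
        padic_unit_of_nat_diff_p zero_less_Suc times_divide_eq_right mult_1_right)
  ultimately have "padic_dvd p 3 (P * F - (1 + 2 * A + 2 * A^2) * (1 + 2 * w + 2 * w^2))"
    using A1 w1 prime
    by (intro padic_dvd_mult_diff) (auto intro!: padic_int_add padic_int_mult padic_int_power
        dest: padic_dvd_imp_int[OF prime] padic_dvd_diff[OF prime])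
  moreover have "padic_dvd p 3 ((1 + 2 * A + 2 * A^2) * (1 + 2 * w + 2 * w^2) - (1 + 2 * (A + w) + 2 * (A + w)^2))"
    by (rule padic_dvd_truncated_exp_mult[OF A1 w1])
  ultimately have "padic_dvd p 3 (P * F - (1 + 2 * (A + w) + 2 * (A + w)^2))"
    using padic_dvd_diff_trans[OF prime] by metis
  moreover have "P * F = (\<Prod>i=1..Suc s. (of_nat p + of_nat i) / (of_nat i - of_nat p))"
    unfolding P_def F_def by (simp add: prod.cl_ivl_Suc)
  moreover have "A + w = of_nat p * harmonic (Suc s)"
    unfolding A_def w_def harmonic_Suc by (simp add: algebra_simps add_divide_distrib)
  ultimately show ?case by (simp add: power_mult_distrib mult.assoc)
qed (simp add: padic_dvd_0[OF prime])

text \<open>The hypothesis on \<open>Q\<close> gives \<open>Q \<equiv> -2H (mod p)\<close>, hence \<open>pQ\<^sup>2/2 \<equiv> 2pH\<^sup>2 (mod p\<^sup>2)\<close>.\<close>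

lemma padic_dvd_expansion_relations:
  assumes H: "padic_int p H" and w: "padic_dvd p 1 w"
    and Q: "padic_dvd p 2 (Q - (- 2 * H - 2 * of_nat p * H^2 - 2 * w))"
    and S1: "padic_dvd p 2 (S1 - (- 2 * H - 2 * w))" and S2: "padic_dvd p 1 (S2 + 2 * H^2)"
  shows "padic_dvd p 2 (S1 - (Q + 1/2 * of_nat p * Q^2))" and "padic_dvd p 1 (S2 - (- 1/2 * Q^2))"
proof -
  have "padic_dvd p 1 (Q + 2 * H)"
  proof -
    have e: "Q + 2 * H = (Q - (- 2 * H - 2 * of_nat p * H^2 - 2 * w)) - of_nat p * (2 * H^2) - 2 * w"
      by simp
    have "padic_dvd p 1 (of_nat p * (2 * H^2))"
      using H prime by (intro padic_dvd_mult_right[OF prime padic_dvd_p[OF prime]])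
        (simp add: padic_int_mult padic_int_power)
    from padic_dvd_diff[OF prime padic_dvd_diff[OF prime padic_dvd_mono[OF prime one_le_numeral Q] this]
        padic_dvd_mult_left[OF prime padic_int_numeral[OF prime] w]]
    show ?thesis unfolding e .
  qed
  moreover have "padic_int p (Q - 2 * H)"
    using padic_dvd_imp_int[OF prime calculation] H prime
    by (metis add_diff_cancel_right' padic_int_diff padic_int_mult padic_int_numeral mult_2)
  ultimately have "padic_dvd p 1 ((Q + 2 * H) * (Q - 2 * H))"
    by (rule padic_dvd_mult_right[OF prime])
  then have QH: "padic_dvd p 1 (Q^2 - 4 * H^2)"
    by (simp add: algebra_simps power2_eq_square)
  have "padic_dvd p 2 ((of_nat p * (Q^2 - 4 * H^2)) * (1/2))"
    using padic_dvd_mult_right[OF prime padic_dvd_p_mult[OF prime QH] padic_int_half]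
    by (simp add: numeral_2_eq_2)
  from padic_dvd_add[OF prime Q this]
  have "padic_dvd p 2 ((Q + 1/2 * of_nat p * Q^2) - (- 2 * H - 2 * w))"
    by (simp add: algebra_simps power2_eq_square)
  then show "padic_dvd p 2 (S1 - (Q + 1/2 * of_nat p * Q^2))"
    using padic_dvd_diff_trans[OF prime S1] padic_dvd_uminus[OF prime] by fastforce
  have "padic_dvd p 1 ((S2 + 2 * H^2) + (Q^2 - 4 * H^2) * (1/2))"
    using padic_dvd_add[OF prime S2 padic_dvd_mult_right[OF prime QH padic_int_half]] .
  then show "padic_dvd p 1 (S2 - (- 1/2 * Q^2))"
    by (simp add: algebra_simps)
qed

end

definition shift_residue :: "nat \<Rightarrow> nat \<Rightarrow> nat \<Rightarrow> int" where
  "shift_residue p s j = (int j - int s) mod int p"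

lemma prod_of_int_atLeastAtMost_eq_fact: "(\<Prod>c\<in>{1..int n}. (of_int c :: rat)) = fact n"
proof -
  have "(\<Prod>c\<in>{1..int n}. (of_int c :: rat)) = (\<Prod>i\<in>{1..n}. of_nat i)"
    by (rule prod.reindex_bij_witness[of _ int nat]) auto
  then show ?thesis by (simp add: fact_prod)
qed

context
  fixes p s :: nat
  assumes prime: "prime p" and p_gt_3: "p > 3" and s_less: "s < p"
begin

lemma not_dvd_shift:
  assumes "j \<in> {0..<p} - {s}"
  shows "\<not> int p dvd (int j - int s)"
proof
  assume "int p dvd (int j - int s)"
  then have "[int j = int s] (mod int p)" by (simp add: cong_iff_dvd_diff)
  then show False using assms s_less by (simp add: cong_def)
qed

lemma not_dvd_neg_shift: "j \<in> {0..<p} - {s} \<Longrightarrow> \<not> int p dvd (int p - (int j - int s))"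
  using not_dvd_shift dvd_diff[OF dvd_refl[of "int p"]] by fastforce

lemma padic_unit_shift: "j \<in> {0..<p} - {s} \<Longrightarrow> padic_unit p (of_nat j - of_nat s)"
  using padic_unit_of_int[OF prime not_dvd_shift] by simp

lemma padic_unit_neg_shift: "j \<in> {0..<p} - {s} \<Longrightarrow> padic_unit p (of_nat p - (of_nat j - of_nat s))"
  using padic_unit_of_int[OF prime not_dvd_neg_shift] by simp

lemma inj_on_shift_residue: "inj_on (shift_residue p s) ({0..<p} - {s})"
proof (rule inj_onI)
  fix a b assume a: "a \<in> {0..<p} - {s}" and b: "b \<in> {0..<p} - {s}"
    and "shift_residue p s a = shift_residue p s b"
  then have "int p dvd (int a - int s) - (int b - int s)"
    unfolding shift_residue_def by (simp add: mod_eq_dvd_iff)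
  then have "[int a = int b] (mod int p)" by (simp add: cong_iff_dvd_diff)
  then show "a = b" using a b by (simp add: cong_def)
qed

lemma inj_on_neg_shift_mod: "inj_on (\<lambda>j. (int p - (int j - int s)) mod int p) ({0..<p} - {s})"
proof (rule inj_onI)
  fix a b assume a: "a \<in> {0..<p} - {s}" and b: "b \<in> {0..<p} - {s}"
    and "(int p - (int a - int s)) mod int p = (int p - (int b - int s)) mod int p"
  then have "int p dvd (int p - (int a - int s)) - (int p - (int b - int s))"
    by (simp add: mod_eq_dvd_iff)
  then have "[int b = int a] (mod int p)" by (simp add: cong_iff_dvd_diff)
  then show "a = b" using a b by (simp add: cong_def)
qed

lemma padic_dvd_inv_power_sum_1_2: "k \<in> {1, 2} \<Longrightarrow> padic_dvd p 1 (inv_power_sum p k)"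
  using p_gt_3 by (intro padic_dvd_inv_power_sum[OF prime]) (auto dest: zdvd_imp_le)

lemma padic_dvd_sum_inverse_power_shift:
  assumes "k \<in> {1, 2}"
  shows "padic_dvd p 1 (\<Sum>j\<in>{0..<p} - {s}. 1 / (of_nat j - of_nat s)^k)"
proof -
  have "padic_dvd p 1 ((\<Sum>j\<in>{0..<p} - {s}. 1 / (of_int (int j - int s))^k) - inv_power_sum p k)"
    using inj_on_shift_residue not_dvd_shift s_less unfolding shift_residue_def
    by (intro padic_dvd_sum_inverse_power_residues[OF prime]) auto
  then have "padic_dvd p 1 ((\<Sum>j\<in>{0..<p} - {s}. 1 / (of_nat j - of_nat s)^k) - inv_power_sum p k)"
    by simp
  from padic_dvd_add[OF prime this padic_dvd_inv_power_sum_1_2[OF assms]] show ?thesis by simp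
qed

lemma padic_dvd_sum_inverse_power_neg_shift:
  assumes "k \<in> {1, 2}"
  shows "padic_dvd p 1 (\<Sum>j\<in>{0..<p} - {s}. 1 / (of_nat p - (of_nat j - of_nat s))^k)"
proof -
  have "padic_dvd p 1 ((\<Sum>j\<in>{0..<p} - {s}. 1 / (of_int (int p - (int j - int s)))^k) - inv_power_sum p k)"
    using inj_on_neg_shift_mod not_dvd_neg_shift s_less
    by (intro padic_dvd_sum_inverse_power_residues[OF prime]) auto
  then have "padic_dvd p 1 ((\<Sum>j\<in>{0..<p} - {s}. 1 / (of_nat p - (of_nat j - of_nat s))^k) - inv_power_sum p k)"
    by simp
  from padic_dvd_add[OF prime this padic_dvd_inv_power_sum_1_2[OF assms]] show ?thesis by simp
qed

lemma sum_inverse_shift_eq_harmonic: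
  "(\<Sum>j\<in>{0..<p} - {s}. 1 / (of_nat j - of_nat s :: rat)) = harmonic (p - 1 - s) - harmonic s"
proof -
  have "{0..<p} - {s} = {0..<s} \<union> {Suc s..<p}" using s_less by auto
  then have "(\<Sum>j\<in>{0..<p} - {s}. 1 / (of_nat j - of_nat s :: rat)) =
      (\<Sum>j\<in>{0..<s}. 1 / (of_nat j - of_nat s)) + (\<Sum>j\<in>{Suc s..<p}. 1 / (of_nat j - of_nat s))"
    by (simp add: sum.union_disjoint)
  moreover have "(\<Sum>j\<in>{0..<s}. 1 / (of_nat j - of_nat s :: rat)) = (\<Sum>i\<in>{1..s}. - (1 / of_nat i))"
  proof -
    have inv_neg: "1 / (x - y) = - (1 / (y - x))" for x y :: rat
      by (metis minus_diff_eq minus_divide_right)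
    show ?thesis
      by (rule sum.reindex_bij_witness[of _ "\<lambda>i. s - i" "\<lambda>j. s - j"])
         (auto simp: of_nat_diff inv_neg[of "of_nat _" "of_nat s"])
  qed
  moreover have "(\<Sum>j\<in>{Suc s..<p}. 1 / (of_nat j - of_nat s :: rat)) = (\<Sum>i\<in>{1..p-1-s}. 1 / of_nat i)"
    by (rule sum.reindex_bij_witness[of _ "\<lambda>i. i + s" "\<lambda>j. j - s"]) (auto simp: of_nat_diff)
  ultimately show ?thesis unfolding harmonic_def by (simp add: sum_negf)
qed

lemma padic_dvd_harmonic_diff: "padic_dvd p 1 (harmonic (p - 1 - s) - harmonic s)"
  using padic_dvd_sum_inverse_power_shift[of 1] sum_inverse_shift_eq_harmonic by simp

text \<open>With \<open>a = j - s\<close> and \<open>b = p - a\<close>: \<open>1/a + 1/b = p/(ab)\<close> and \<open>1/(ab) \<equiv> -1/a\<^sup>2 (mod p)\<close>.\<close>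

lemma padic_dvd_sum_inverse_shift_add_neg_shift:
  "padic_dvd p 2 ((\<Sum>j\<in>{0..<p} - {s}. 1 / (of_nat j - of_nat s :: rat)) +
                   (\<Sum>j\<in>{0..<p} - {s}. 1 / (of_nat p - (of_nat j - of_nat s) :: rat)))"
proof -
  define a b where "a j = (of_nat j - of_nat s :: rat)" and "b j = (of_nat p - (of_nat j - of_nat s) :: rat)" for j
  let ?J = "{0..<p} - {s}"
  have a: "padic_unit p (a j)" and b: "padic_unit p (b j)" if "j \<in> ?J" for j
    unfolding a_def b_def using padic_unit_shift[OF that] padic_unit_neg_shift[OF that] by simp_all
  have ab: "b j = of_nat p - a j" for j unfolding a_def b_def by simp
  have nz: "a j \<noteq> 0" "of_nat p - a j \<noteq> 0" if "j \<in> ?J" for j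
    using padic_unit_nonzero[OF prime a[OF that]] padic_unit_nonzero[OF prime b[OF that]] ab by auto
  have h1: "padic_dvd p 1 (\<Sum>j\<in>?J. of_nat p * (1 / (a j * a j * b j)))"
    using a b padic_unit_mult[OF prime]
    by (intro padic_dvd_sum[OF prime] padic_dvd_mult_right[OF prime padic_dvd_p[OF prime]]
        padic_int_inverse_unit[OF prime]) blast
  have h2: "padic_dvd p 1 (\<Sum>j\<in>?J. 1 / (a j)^2)"
    using padic_dvd_sum_inverse_power_shift[of 2] unfolding a_def by simp
  have "(\<Sum>j\<in>?J. of_nat p * (1 / (a j * a j * b j))) - (\<Sum>j\<in>?J. 1 / (a j)^2) =
      (\<Sum>j\<in>?J. 1 / (a j * b j))"
    unfolding sum_subtractf[symmetric]
    by (rule sum.cong) (use nz in \<open>auto simp: ab field_simps power2_eq_square\<close>)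
  with padic_dvd_diff[OF prime h1 h2] have "padic_dvd p 1 (\<Sum>j\<in>?J. 1 / (a j * b j))"
    by simp
  then have "padic_dvd p (Suc 1) (of_nat p * (\<Sum>j\<in>?J. 1 / (a j * b j)))"
    by (rule padic_dvd_p_mult[OF prime])
  then have "padic_dvd p 2 (\<Sum>j\<in>?J. of_nat p * (1 / (a j * b j)))"
    by (simp only: sum_distrib_left Suc_1)
  also have "(\<Sum>j\<in>?J. of_nat p * (1 / (a j * b j))) = (\<Sum>j\<in>?J. 1 / a j) + (\<Sum>j\<in>?J. 1 / b j)"
    unfolding sum.distrib[symmetric]
    by (rule sum.cong) (use nz in \<open>auto simp: ab field_simps\<close>)
  finally show ?thesis unfolding a_def b_def .
qed

lemma image_shift_residue: "shift_residue p s ` ({0..<p} - {s}) = {1..int p - 1}"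
proof (rule card_subset_eq)
  show "shift_residue p s ` ({0..<p} - {s}) \<subseteq> {1..int p - 1}"
  proof
    fix c assume "c \<in> shift_residue p s ` ({0..<p} - {s})"
    then obtain j where j: "j \<in> {0..<p} - {s}" "c = shift_residue p s j" by blast
    then have "c \<noteq> 0" using not_dvd_shift[OF j(1)] unfolding shift_residue_def by (auto simp: dvd_eq_mod_eq_0)
    moreover have "0 \<le> c" "c < int p" using j s_less unfolding shift_residue_def by auto
    ultimately show "c \<in> {1..int p - 1}" by auto
  qed
qed (use s_less card_image[OF inj_on_shift_residue] in auto)

lemma prod_shift_residue: "(\<Prod>j\<in>{0..<p} - {s}. (of_int (shift_residue p s j) :: rat)) = fact (p - 1)"
proof -
  have "(\<Prod>j\<in>{0..<p} - {s}. (of_int (shift_residue p s j) :: rat)) = (\<Prod>c\<in>{1..int p - 1}. of_int c)"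
    using prod.reindex[OF inj_on_shift_residue, of "\<lambda>c. (of_int c :: rat)"] image_shift_residue by simp
  then show ?thesis using prod_of_int_atLeastAtMost_eq_fact[of "p - 1"] s_less by (simp add: of_nat_diff)
qed

lemma prod_p_minus_shift_residue:
  "(\<Prod>j\<in>{0..<p} - {s}. (of_nat p - of_int (shift_residue p s j) :: rat)) = fact (p - 1)"
proof -
  have "(\<Prod>j\<in>{0..<p} - {s}. (of_nat p - of_int (shift_residue p s j) :: rat)) =
      (\<Prod>c\<in>{1..int p - 1}. of_nat p - of_int c)"
    using prod.reindex[OF inj_on_shift_residue, of "\<lambda>c. (of_nat p - of_int c :: rat)"] image_shift_residue
    by simp
  also have "\<dots> = (\<Prod>c\<in>{1..int p - 1}. of_int c)"
    by (rule prod.reindex_bij_witness[of _ "\<lambda>c. int p - c" "\<lambda>c. int p - c"]) auto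
  finally show ?thesis using prod_of_int_atLeastAtMost_eq_fact[of "p - 1"] s_less by (simp add: of_nat_diff)
qed

text \<open>The factor for \<open>j\<close> is \<open>1\<close> unless \<open>j < s\<close>, where the residue of \<open>j - s\<close> is \<open>j - s + p\<close>.\<close>

lemma prod_shift_residue_ratio:
  "(\<Prod>j\<in>{0..<p} - {s}. ((of_nat j - of_nat s) / of_int (shift_residue p s j)) *
      ((of_nat p - (of_nat j - of_nat s)) / (of_nat p - of_int (shift_residue p s j))) :: rat)
   = (\<Prod>i=1..s. (of_nat p + of_nat i) / (of_nat i - of_nat p))"
proof -
  define \<rho> :: "nat \<Rightarrow> rat" where "\<rho> j = ((of_nat j - of_nat s) / of_int (shift_residue p s j)) *
      ((of_nat p - (of_nat j - of_nat s)) / (of_nat p - of_int (shift_residue p s j)))" for j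
  have "\<rho> j = 1" if "j \<in> {0..<p} - {s}" "s < j" for j
  proof -
    have "shift_residue p s j = int j - int s"
      unfolding shift_residue_def using that by (auto intro: mod_pos_pos_trivial)
    moreover have "(of_nat j - of_nat s :: rat) \<noteq> 0" "(of_nat p - (of_nat j - of_nat s) :: rat) \<noteq> 0"
      using that by auto
    ultimately show ?thesis unfolding \<rho>_def by simp
  qed
  then have "(\<Prod>j\<in>{0..<p} - {s}. \<rho> j) = (\<Prod>j\<in>{0..<s}. \<rho> j)"
    by (intro prod.mono_neutral_cong_right) (use s_less in auto)
  also have "\<dots> = (\<Prod>j\<in>{0..<s}. (of_nat p + of_nat (s - j)) / (of_nat (s - j) - of_nat p))"
  proof (rule prod.cong)
    fix j assume j: "j \<in> {0..<s}"
    define a where "a = (of_nat (s - j) :: rat)"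
    have "(int j - int s + int p) mod int p = int j - int s + int p"
      using j s_less by (intro mod_pos_pos_trivial) auto
    then have res: "(of_int (shift_residue p s j) :: rat) = of_nat p - a"
      unfolding shift_residue_def a_def using j by (simp add: of_nat_diff)
    have shift: "(of_nat j - of_nat s :: rat) = - a" using j unfolding a_def by (simp add: of_nat_diff)
    have "a \<noteq> 0" "of_nat p - a \<noteq> 0" using j s_less unfolding a_def by (auto simp: of_nat_diff)
    then show "\<rho> j = (of_nat p + of_nat (s - j)) / (of_nat (s - j) - of_nat p)"
      unfolding \<rho>_def res shift a_def[symmetric] by (simp add: field_simps)
  qed simp
  also have "\<dots> = (\<Prod>i=1..s. (of_nat p + of_nat i) / (of_nat i - of_nat p))"
    by (rule prod.reindex_bij_witness[of _ "\<lambda>i. s - i" "\<lambda>j. s - j"]) auto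
  finally show ?thesis unfolding \<rho>_def .
qed

end

section \<open>The Pochhammer product\<close>

text \<open>For \<open>x = u - s\<close> the Pochhammer product \<open>(x)\<^sub>p (1 - x)\<^sub>p\<close> equals
  \<open>u (p - u) ((p - 1)!)\<^sup>2 \<cdot> shifted_prod p s u\<close>.\<close>

definition shifted_prod :: "nat \<Rightarrow> nat \<Rightarrow> rat \<Rightarrow> rat" where
  "shifted_prod p s u =
     (\<Prod>j\<in>{0..<p} - {s}. ((of_nat j - of_nat s) + u) * (of_nat p - (of_nat j - of_nat s) - u))
       / (fact (p - 1))^2"

context
  fixes p s :: nat
  assumes prime: "prime p" and p_gt_3: "p > 3" and s_less: "s < p"
begin

lemma shifted_prod_factorization:
  "shifted_prod p s u = (\<Prod>i=1..s. (of_nat p + of_nat i) / (of_nat i - of_nat p)) *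
     ((\<Prod>j\<in>{0..<p} - {s}. 1 + u / (of_nat j - of_nat s)) *
      (\<Prod>j\<in>{0..<p} - {s}. 1 + (- u) / (of_nat p - (of_nat j - of_nat s))))"
proof -
  let ?J = "{0..<p} - {s}"
  define a c where "a j = (of_nat j - of_nat s :: rat)" and "c j = (of_int (shift_residue p s j) :: rat)" for j
  have nz: "a j \<noteq> 0" "of_nat p - a j \<noteq> 0" "c j \<noteq> 0" "of_nat p - c j \<noteq> 0" if "j \<in> ?J" for j
  proof -
    show "a j \<noteq> 0" "of_nat p - a j \<noteq> 0"
      unfolding a_def using padic_unit_nonzero[OF prime] padic_unit_shift[OF prime p_gt_3 s_less that]
        padic_unit_neg_shift[OF prime p_gt_3 s_less that] by blast+
    have "shift_residue p s j \<in> {1..int p - 1}"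
      using image_shift_residue[OF prime p_gt_3 s_less] that by blast
    then show "c j \<noteq> 0" "of_nat p - c j \<noteq> 0" unfolding c_def by auto
  qed
  have "(fact (p - 1))^2 = (\<Prod>j\<in>?J. c j * (of_nat p - c j))"
    unfolding prod.distrib c_def prod_shift_residue[OF prime p_gt_3 s_less]
      prod_p_minus_shift_residue[OF prime p_gt_3 s_less] by (simp add: power2_eq_square)
  then have "shifted_prod p s u = (\<Prod>j\<in>?J. (a j + u) * (of_nat p - a j - u) / (c j * (of_nat p - c j)))"
    unfolding shifted_prod_def a_def prod_dividef by simp
  also have "\<dots> = (\<Prod>j\<in>?J. ((a j / c j) * ((of_nat p - a j) / (of_nat p - c j))) *
                              ((1 + u / a j) * (1 + (- u) / (of_nat p - a j))))"
  proof (rule prod.cong)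
    fix j assume "j \<in> ?J"
    have "(A + u) * (B - u) / (C * D) = ((A / C) * (B / D)) * ((1 + u / A) * (1 + (- u) / B))"
      if "A \<noteq> 0" "B \<noteq> 0" "C \<noteq> 0" "D \<noteq> 0" for A B C D :: rat
      using that by (simp add: field_simps)
    then show "(a j + u) * (of_nat p - a j - u) / (c j * (of_nat p - c j)) =
        ((a j / c j) * ((of_nat p - a j) / (of_nat p - c j))) * ((1 + u / a j) * (1 + (- u) / (of_nat p - a j)))"
      using nz[OF \<open>j \<in> ?J\<close>] by (metis diff_diff_eq)
  qed simp
  also have "\<dots> = (\<Prod>j\<in>?J. (a j / c j) * ((of_nat p - a j) / (of_nat p - c j))) *
                    (\<Prod>j\<in>?J. (1 + u / a j) * (1 + (- u) / (of_nat p - a j)))"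
    by (rule prod.distrib)
  also have "(\<Prod>j\<in>?J. (a j / c j) * ((of_nat p - a j) / (of_nat p - c j))) =
      (\<Prod>i=1..s. (of_nat p + of_nat i) / (of_nat i - of_nat p))"
    unfolding a_def c_def by (rule prod_shift_residue_ratio[OF prime p_gt_3 s_less])
  also have "(\<Prod>j\<in>?J. (1 + u / a j) * (1 + (- u) / (of_nat p - a j))) =
      (\<Prod>j\<in>?J. 1 + u / a j) * (\<Prod>j\<in>?J. 1 + (- u) / (of_nat p - (of_nat j - of_nat s)))"
    unfolding prod.distrib a_def by simp
  finally show ?thesis unfolding a_def .
qed

lemma prod_one_plus_inverse_shift_cong:
  assumes u: "padic_dvd p 1 u"
  shows "padic_dvd p 3 ((\<Prod>j\<in>{0..<p} - {s}. 1 + u / (of_nat j - of_nat s)) *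
           (\<Prod>j\<in>{0..<p} - {s}. 1 + (- u) / (of_nat p - (of_nat j - of_nat s))) -
           (1 + 2 * (u * (harmonic (p - 1 - s) - harmonic s))))"
proof -
  let ?J = "{0..<p} - {s}"
  have odd: "p \<noteq> 2" using p_gt_3 by simp
  define a b where "a j = (of_nat j - of_nat s :: rat)" and "b j = (of_nat p - (of_nat j - of_nat s) :: rat)" for j
  define A B where "A = (\<Sum>j\<in>?J. 1 / a j)" and "B = (\<Sum>j\<in>?J. 1 / b j)"
  define E1 E2 where "E1 = (\<Prod>j\<in>?J. 1 + u / a j)" and "E2 = (\<Prod>j\<in>?J. 1 + (- u) / b j)"
  have A: "padic_dvd p 1 A" and B: "padic_dvd p 1 B" and AB: "padic_dvd p 2 (A + B)"
    unfolding A_def B_def a_def b_def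
    using padic_dvd_sum_inverse_power_shift[OF prime p_gt_3 s_less, of 1]
      padic_dvd_sum_inverse_power_neg_shift[OF prime p_gt_3 s_less, of 1]
      padic_dvd_sum_inverse_shift_add_neg_shift[OF prime p_gt_3 s_less] by simp_all
  have "padic_dvd p 3 (E1 - (1 + u * A))"
    unfolding E1_def A_def a_def
    using padic_dvd_sum_inverse_power_shift[OF prime p_gt_3 s_less, of 1]
      padic_dvd_sum_inverse_power_shift[OF prime p_gt_3 s_less, of 2] padic_unit_shift[OF prime p_gt_3 s_less]
    by (intro padic_dvd_prod_one_plus_divide[OF prime odd _ u]) auto
  moreover have "padic_dvd p 3 (E2 - (1 + (- u) * B))"
    unfolding E2_def B_def b_def
    using padic_dvd_sum_inverse_power_neg_shift[OF prime p_gt_3 s_less, of 1]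
      padic_dvd_sum_inverse_power_neg_shift[OF prime p_gt_3 s_less, of 2]
      padic_unit_neg_shift[OF prime p_gt_3 s_less]
    by (intro padic_dvd_prod_one_plus_divide[OF prime odd _ padic_dvd_uminus[OF prime u]]) auto
  moreover have "padic_int p (1 + (- u) * B)" "padic_int p (1 + u * A)"
    using prime padic_dvd_imp_int[OF prime u] padic_dvd_imp_int[OF prime A] padic_dvd_imp_int[OF prime B]
    by (simp_all add: padic_int_add padic_int_mult padic_int_uminus padic_int_diff)
  ultimately have "padic_dvd p 3 (E1 * E2 - (1 + u * A) * (1 + (- u) * B))"
    using padic_int_add[OF prime padic_dvd_imp_int[OF prime] \<open>padic_int p (1 + (- u) * B)\<close>]
    by (intro padic_dvd_mult_diff[OF prime]) fastforce+
  moreover have "(1 + u * A) * (1 + (- u) * B) - (1 + 2 * (u * A)) = - (u * (A + B)) - (u * A) * (u * B)"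
    by (simp add: algebra_simps)
  moreover have "padic_dvd p 3 (- (u * (A + B)) - (u * A) * (u * B))"
    using padic_dvd_3_mult[OF prime u AB]
      padic_dvd_mono[OF prime _ padic_dvd_mult[OF prime padic_dvd_2_mult[OF prime u A]
          padic_dvd_2_mult[OF prime u B]], of 3]
    by (intro padic_dvd_diff[OF prime] padic_dvd_uminus[OF prime]) simp_all
  ultimately have "padic_dvd p 3 (E1 * E2 - (1 + 2 * (u * A)))"
    using padic_dvd_diff_trans[OF prime] by metis
  moreover have "A = harmonic (p - 1 - s) - harmonic s"
    unfolding A_def a_def by (rule sum_inverse_shift_eq_harmonic[OF prime p_gt_3 s_less])
  ultimately show ?thesis unfolding E1_def E2_def a_def b_def by simp
qed

lemma shifted_prod_cong:
  assumes u: "padic_dvd p 1 u"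
  shows "padic_dvd p 3 (shifted_prod p s u - (1 + 2 * of_nat p * harmonic s +
           2 * (of_nat p)^2 * (harmonic s)^2 + 2 * u * (harmonic (p - 1 - s) - harmonic s)))"
proof -
  have odd: "p \<noteq> 2" using p_gt_3 by simp
  define D where "D = harmonic (p - 1 - s) - harmonic s"
  define T where "T = 1 + 2 * of_nat p * harmonic s + 2 * (of_nat p)^2 * (harmonic s)^2"
  define P E where "P = (\<Prod>i=1..s. (of_nat p + of_nat i) / (of_nat i - of_nat p) :: rat)"
    and "E = (\<Prod>j\<in>{0..<p} - {s}. 1 + u / (of_nat j - of_nat s)) *
             (\<Prod>j\<in>{0..<p} - {s}. 1 + (- u) / (of_nat p - (of_nat j - of_nat s)))"
  have P: "padic_dvd p 3 (P - T)"
    unfolding P_def T_def by (rule prod_reflection_cong[OF prime odd s_less])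
  have E: "padic_dvd p 3 (E - (1 + 2 * (u * D)))"
    unfolding E_def D_def by (rule prod_one_plus_inverse_shift_cong[OF u])
  have D: "padic_dvd p 1 D"
    unfolding D_def by (rule padic_dvd_harmonic_diff[OF prime p_gt_3 s_less])
  have T1: "padic_dvd p 1 (T - 1)"
  proof -
    have "T - 1 = of_nat p * (2 * harmonic s + 2 * of_nat p * (harmonic s)^2)"
      unfolding T_def by (simp add: algebra_simps power2_eq_square)
    then show ?thesis
      using padic_dvd_mult_right[OF prime padic_dvd_p[OF prime]] padic_int_harmonic[OF prime odd s_less] prime
      by (simp add: padic_int_add padic_int_mult padic_int_power)
  qed
  have int_T: "padic_int p T" and int_E: "padic_int p E"
    using padic_int_add[OF prime padic_dvd_imp_int[OF prime T1], of 1]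
      padic_int_add[OF prime padic_dvd_imp_int[OF prime E], of "1 + 2 * (u * D)"]
      prime padic_dvd_imp_int[OF prime u] padic_dvd_imp_int[OF prime D]
    by (simp_all add: padic_int_add padic_int_mult)
  have "padic_dvd p 3 (P * E - T * (1 + 2 * (u * D)))"
    using padic_dvd_mult_diff[OF prime P E int_E int_T] .
  moreover have "padic_dvd p 3 ((T - 1) * (2 * (u * D)))"
    using padic_dvd_3_mult[OF prime T1 padic_dvd_mult_left[OF prime padic_int_numeral[OF prime]
          padic_dvd_2_mult[OF prime u D]]] .
  ultimately have "padic_dvd p 3 ((P * E - T * (1 + 2 * (u * D))) + (T - 1) * (2 * (u * D)))"
    by (rule padic_dvd_add[OF prime])
  moreover have "(P * E - T * (1 + 2 * (u * D))) + (T - 1) * (2 * (u * D)) = P * E - (T + 2 * u * D)"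
    by (simp add: algebra_simps)
  ultimately have "padic_dvd p 3 (P * E - (T + 2 * u * D))" by simp
  then show ?thesis
    unfolding shifted_prod_factorization P_def E_def T_def D_def by (simp add: add.assoc)
qed

end

lemma pochhammer_mult_pochhammer_one_minus:
  assumes "s < p"
  shows "pochhammer x p * pochhammer (1 - x) p =
           (x + of_nat s) * (of_nat p - (x + of_nat s)) * (fact (p - 1))^2 * shifted_prod p s (x + of_nat s)"
proof -
  define u where "u = x + of_nat s"
  let ?J = "{0..<p} - {s}"
  have "pochhammer x p = (\<Prod>j\<in>{0..<p}. x + of_nat j)" by (simp add: pochhammer_prod)
  also have "\<dots> = u * (\<Prod>j\<in>?J. x + of_nat j)"
    unfolding u_def by (rule prod.remove) (use assms in auto)
  finally have left: "pochhammer x p = u * (\<Prod>j\<in>?J. (of_nat j - of_nat s) + u)"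
    unfolding u_def by (simp add: algebra_simps)
  have "pochhammer (1 - x) p = (\<Prod>j\<in>{0..<p}. 1 - x + of_nat j)" by (simp add: pochhammer_prod)
  also have "\<dots> = (1 - x + of_nat (p - 1 - s)) * (\<Prod>j\<in>{0..<p} - {p - 1 - s}. 1 - x + of_nat j)"
    by (rule prod.remove) (use assms in auto)
  also have "(\<Prod>j\<in>{0..<p} - {p - 1 - s}. 1 - x + of_nat j) = (\<Prod>j\<in>?J. of_nat p - (of_nat j - of_nat s) - u)"
    by (rule prod.reindex_bij_witness[of _ "\<lambda>j. p - 1 - j" "\<lambda>j. p - 1 - j"])
       (use assms in \<open>auto simp: u_def of_nat_diff\<close>)
  also have "1 - x + of_nat (p - 1 - s) = of_nat p - u" using assms by (simp add: u_def of_nat_diff)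
  finally have right: "pochhammer (1 - x) p = (of_nat p - u) * (\<Prod>j\<in>?J. of_nat p - (of_nat j - of_nat s) - u)" .
  show ?thesis
    unfolding left right shifted_prod_def u_def[symmetric] prod.distrib by simp
qed

section \<open>The truncated series\<close>

context
  fixes p s :: nat and x :: rat
  assumes prime: "prime p" and p_gt_3: "p > 3" and s_less: "s < p"
    and shift: "padic_dvd p 1 (x + of_nat s)"
begin

lemma padic_dvd_hterm_argument: "padic_dvd p 1 ((x + of_nat s) * (1 + of_nat s - x))"
proof -
  have "padic_int p ((1 + 2 * of_nat s) - (x + of_nat s))"
    using prime by (intro padic_int_diff[OF prime _ padic_dvd_imp_int[OF prime shift]]) (simp add: padic_int_add padic_int_mult)
  moreover have "(1 + 2 * of_nat s) - (x + of_nat s) = 1 + of_nat s - x"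
    by simp
  ultimately show ?thesis using padic_dvd_mult_right[OF prime shift] by metis
qed

lemma sum_hterm_eq_hterm_poly:
  "(\<Sum>k=1..p-1. hterm x k * c k) =
     (\<Sum>k=1..p-1. c k * hterm_poly s k ((x + of_nat s) * (1 + of_nat s - x)))"
  by (simp add: hterm_eq_hterm_poly[of x _ s] mult.commute)

lemma sum_hterm_poly_node:
  "i < p \<Longrightarrow> (\<Sum>k=1..p-1. c k * hterm_poly s k ((of_nat s - of_nat i) * (of_nat s + of_nat i + 1))) =
     (\<Sum>k=1..i. hterm (- of_nat i) k * c k)"
  unfolding hterm_poly_at_node using sum_hterm_neg_nat_truncate[of i "p - 1" c]
  by (simp add: mult.commute)

lemma padic_int_inverse_power_nat: "k \<in> {1..p-1} \<Longrightarrow> padic_int p (1 / (of_nat k)^e)"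
  using padic_int_inverse_unit[OF prime padic_unit_power[OF prime padic_unit_of_nat[OF prime]]] by auto

lemma sum_hterm_div_square_cong:
  "padic_dvd p 1 ((\<Sum>k=1..p-1. hterm x k / (of_nat k)^2) + 2 * (harmonic s)^2)"
proof -
  let ?F = "\<lambda>z. \<Sum>k=1..p-1. 1 / (of_nat k)^2 * hterm_poly s k z"
  have "secant_cong p ((x + of_nat s) * (1 + of_nat s - x)) (of_nat p) ?F"
    using prime padic_dvd_hterm_argument padic_dvd_p[OF prime] padic_int_inverse_power_nat
    by (intro secant_cong_hterm_poly_sum) auto
  then have "padic_dvd p 1 (?F ((x + of_nat s) * (1 + of_nat s - x)) - ?F 0)"
    unfolding secant_cong_def by blast
  moreover have "?F 0 = - 2 * (harmonic s)^2"
    using sum_hterm_poly_node[of s "\<lambda>k. 1 / (of_nat k)^2"] s_less sum_hterm_neg_nat_div_square[of s]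
    by simp
  ultimately show ?thesis
    using sum_hterm_eq_hterm_poly[of "\<lambda>k. 1 / (of_nat k)^2"] by simp
qed

lemma sum_hterm_div_eq_hterm_poly:
  "(\<Sum>k=1..p-1. hterm x k / of_nat k) =
     (\<Sum>k=1..p-1. 1 / of_nat k * hterm_poly s k ((x + of_nat s) * (1 + of_nat s - x)))"
  using sum_hterm_eq_hterm_poly[of "\<lambda>k. 1 / of_nat k"] by simp

lemma sum_hterm_poly_div_node:
  "i < p \<Longrightarrow> (\<Sum>k=1..p-1. 1 / of_nat k * hterm_poly s k ((of_nat s - of_nat i) * (of_nat s + of_nat i + 1)))
     = - 2 * harmonic i"
  using sum_hterm_poly_node[of i "\<lambda>k. 1 / of_nat k"] sum_hterm_neg_nat_div[of i] by simp

text \<open>At \<open>s = (p - 1)/2\<close> the argument \<open>(x + s)(p - (x + s))\<close> is already divisible by \<open>p\<^sup>2\<close>.\<close>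

lemma sum_hterm_div_cong_middle:
  assumes "2 * s + 1 = p"
  shows "padic_dvd p 2 ((\<Sum>k=1..p-1. hterm x k / of_nat k) + 2 * harmonic s)"
proof -
  define z where "z = (x + of_nat s) * (1 + of_nat s - x)"
  define F where "F = (\<lambda>w. \<Sum>k=1..p-1. 1 / of_nat k * hterm_poly s k w)"
  have "secant_cong p z (of_nat p) F"
    unfolding F_def z_def using prime padic_dvd_hterm_argument padic_dvd_p[OF prime]
      padic_int_inverse_power_nat[of _ 1]
    by (intro secant_cong_hterm_poly_sum) auto
  then have secant: "padic_dvd p 2 (F z - F 0 - z * ((F (of_nat p) - F 0) / of_nat p))"
    and slope: "padic_int p ((F (of_nat p) - F 0) / of_nat p)"
    unfolding secant_cong_def by blast+
  have "z = (x + of_nat s) * (of_nat p - (x + of_nat s))"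
    unfolding z_def using assms[symmetric] by (simp add: algebra_simps)
  then have "padic_dvd p 2 z"
    using padic_dvd_2_mult[OF prime shift padic_dvd_diff[OF prime padic_dvd_p[OF prime] shift]] by simp
  then have "padic_dvd p 2 (F z - F 0 - z * ((F (of_nat p) - F 0) / of_nat p) +
      z * ((F (of_nat p) - F 0) / of_nat p))"
    using padic_dvd_add[OF prime secant padic_dvd_mult_right[OF prime _ slope]] by blast
  then have "padic_dvd p 2 (F z - F 0)" by simp
  moreover have "F 0 = - 2 * harmonic s"
    unfolding F_def using sum_hterm_poly_div_node[of s] s_less by simp
  ultimately show ?thesis
    unfolding F_def z_def sum_hterm_div_eq_hterm_poly by simp
qed

lemma sum_hterm_div_cong_off_middle:
  assumes "2 * s + 1 \<noteq> p"
  defines "s' \<equiv> p - 1 - s"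
  shows "padic_dvd p 2 ((\<Sum>k=1..p-1. hterm x k / of_nat k) -
           (- 2 * harmonic s + (x + of_nat s) * (1 + of_nat s - x) * (2 * harmonic s - 2 * harmonic s')
              / ((of_nat s - of_nat s') * of_nat p)))"
proof -
  define z where "z = (x + of_nat s) * (1 + of_nat s - x)"
  define h where "h = (of_nat s - of_nat s') * (of_nat s + of_nat s' + 1 :: rat)"
  define F where "F = (\<lambda>w. \<Sum>k=1..p-1. 1 / of_nat k * hterm_poly s k w)"
  have p_eq: "s + s' + 1 = p" unfolding s'_def using s_less by simp
  then have h_eq: "h = (of_nat s - of_nat s') * of_nat p" unfolding h_def by (simp flip: of_nat_Suc)
  have "padic_dvd p 1 h"
    unfolding h_eq using padic_dvd_mult_left[OF prime padic_int_diff[OF prime] padic_dvd_p[OF prime]]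
      padic_int_of_nat[OF prime] by blast
  moreover have "h \<noteq> 0"
    unfolding h_eq using assms(1) p_eq prime_gt_0_nat[OF prime] by auto
  ultimately have "secant_cong p z h F"
    unfolding F_def z_def using prime padic_dvd_hterm_argument padic_int_inverse_power_nat[of _ 1]
    by (intro secant_cong_hterm_poly_sum) auto
  then have "padic_dvd p 2 (F z - F 0 - z * ((F h - F 0) / h))"
    unfolding secant_cong_def by blast
  moreover have "F 0 = - 2 * harmonic s" "F h = - 2 * harmonic s'"
    unfolding F_def h_def using sum_hterm_poly_div_node[of s] sum_hterm_poly_div_node[of s'] s_less p_eq
    by simp_all
  ultimately show ?thesis
    unfolding F_def z_def sum_hterm_div_eq_hterm_poly h_eq[symmetric] h_def
    by (simp add: field_simps)
qed

lemma sum_hterm_div_cong: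
  "padic_dvd p 2 ((\<Sum>k=1..p-1. hterm x k / of_nat k) -
     (- 2 * harmonic s - 2 * ((x + of_nat s) * (harmonic (p - 1 - s) - harmonic s) / of_nat p)))"
proof (cases "2 * s + 1 = p")
  case True
  then have "p - 1 - s = s" by simp
  then show ?thesis using sum_hterm_div_cong_middle[OF True] by simp
next
  case False
  define s' u A where "s' = p - 1 - s" and "u = x + of_nat s" and "A = harmonic s' - harmonic s"
  define D where "D = (of_nat s - of_nat s' :: rat)"
  have p_eq: "s + s' + 1 = p" unfolding s'_def using s_less by simp
  have "s' \<in> {0..<p} - {s}" using p_eq False by auto
  from padic_unit_uminus[OF prime padic_unit_shift[OF prime p_gt_3 s_less this]]
  have D: "padic_unit p D" unfolding D_def by simp
  have A: "padic_dvd p 1 A"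
    unfolding A_def s'_def by (rule padic_dvd_harmonic_diff[OF prime p_gt_3 s_less])
  have "padic_dvd p 3 (A * (u * (u - of_nat p)))"
    unfolding u_def using padic_dvd_3_mult[OF prime A padic_dvd_2_mult[OF prime shift
        padic_dvd_diff[OF prime shift padic_dvd_p[OF prime]]]] .
  then have "padic_dvd p 2 ((A * (u * (u - of_nat p))) / of_nat p)"
    using padic_dvd_divide_p[OF prime, of 2] by (simp add: numeral_3_eq_3 numeral_2_eq_2)
  then have "padic_dvd p 2 (2 * ((A * (u * (u - of_nat p))) / of_nat p) * (1 / D))"
    using padic_int_inverse_unit[OF prime D]
    by (intro padic_dvd_mult_right[OF prime] padic_dvd_mult_left[OF prime padic_int_numeral[OF prime]])
  moreover have "(- 2 * harmonic s + (x + of_nat s) * (1 + of_nat s - x) * (2 * harmonic s - 2 * harmonic s')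
        / ((of_nat s - of_nat s') * of_nat p)) - (- 2 * harmonic s - 2 * (u * A) / of_nat p)
      = 2 * ((A * (u * (u - of_nat p))) / of_nat p) * (1 / D)"
  proof -
    have "(x + of_nat s) * (1 + of_nat s - x) = u * (D + of_nat p - u)"
      unfolding D_def u_def using p_eq[symmetric] by (simp add: algebra_simps)
    moreover have "2 * harmonic s - 2 * harmonic s' = - 2 * A" unfolding A_def by simp
    moreover have "(- 2 * H + u * (D + P - u) * (- 2 * A) / (D * P)) - (- 2 * H - 2 * (u * A) / P)
        = 2 * ((A * (u * (u - P))) / P) * (1 / D)" if "D \<noteq> 0" "P \<noteq> 0" for H P :: rat
      using that by (simp add: field_simps)
    ultimately show ?thesis
      using padic_unit_nonzero[OF prime D] prime_gt_0_nat[OF prime] unfolding D_def[symmetric] by simp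
  qed
  ultimately show ?thesis
    using padic_dvd_diff_trans[OF prime sum_hterm_div_cong_off_middle[OF False]]
    unfolding s'_def u_def A_def by (simp add: mult.assoc)
qed

end

lemma exists_shift:
  fixes p :: nat and r m :: int
  assumes "prime p" "0 < r" "r < m" "coprime m (int p)"
  obtains s t where "s < p" "0 < t" "t < m" "r + int s * m = int p * t"
proof -
  have p: "p > 1" using prime_gt_1_nat[OF assms(1)] .
  obtain z where z: "[m * z = 1] (mod int p)" using cong_solve_coprime_int[OF assms(4)] by blast
  define s where "s = nat ((- r * z) mod int p)"
  have s: "int s = (- r * z) mod int p" unfolding s_def using p by simp
  have "(- r * z) mod int p < int p" using p by simp
  then have "s < p" using s by linarith
  have "[int s * m = - r * (m * z)] (mod int p)"
    unfolding s(1) by (metis cong_mod_left cong_mult cong_refl mult.assoc mult.commute)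
  also have "[- r * (m * z) = - r * 1] (mod int p)" using z by (rule cong_mult[OF cong_refl])
  finally have "int p dvd r + int s * m" by (simp add: cong_iff_dvd_diff algebra_simps)
  then obtain t where t: "r + int s * m = int p * t" by auto
  have "0 < int p * t" using assms(2,3) t[symmetric] by (simp add: add_pos_nonneg)
  then have "0 < t" using p by (simp add: zero_less_mult_iff)
  have "int s * m \<le> (int p - 1) * m"
    using \<open>s < p\<close> assms(2,3) by (intro mult_right_mono) auto
  then have "int p * t < int p * m" using t assms(3) by (simp add: algebra_simps)
  then have "t < m" using p by simp
  from \<open>s < p\<close> \<open>0 < t\<close> this t show ?thesis by (rule that)
qed

context
  fixes p s :: nat and r m t :: int
  assumes prime: "prime p" and coprime: "coprime m (int p)" and s_less: "s < p"
    and t: "0 < t" "t < m" and shift: "r + int s * m = int p * t"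
begin

lemma r_eq: "(of_int r :: rat) = of_nat p * of_int t - of_nat s * of_int m"
  using arg_cong[OF shift, of "of_int :: int \<Rightarrow> rat"] by (simp add: algebra_simps)

lemma rat_rep_r_div_p: "rat_rep (of_int r / of_nat p) m = t"
proof (rule rat_rep_eqI)
  show "rat_cong m (of_int r / of_nat p) (of_int t)"
  proof (rule rat_cong_intro[of "int p" m "- (int s * m)"])
    show "of_int r / of_nat p - of_int t = (of_int (- (int s * m)) / of_int (int p) :: rat)"
      using prime_gt_0_nat[OF prime] unfolding r_eq by (simp add: field_simps)
  qed (use prime_gt_0_nat[OF prime] coprime in \<open>simp_all add: coprime_commute\<close>)
qed (use t in auto)

lemma rat_rep_neg_r_div_p: "rat_rep (- of_int r / of_nat p) m = m - t"
proof (rule rat_rep_eqI)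
  show "rat_cong m (- of_int r / of_nat p) (of_int (m - t))"
  proof (rule rat_cong_intro[of "int p" m "m * (int s - int p)"])
    show "- of_int r / of_nat p - of_int (m - t) = (of_int (m * (int s - int p)) / of_int (int p) :: rat)"
      using prime_gt_0_nat[OF prime] unfolding r_eq by (simp add: field_simps)
  qed (use prime_gt_0_nat[OF prime] coprime in \<open>simp_all add: coprime_commute\<close>)
qed (use t in auto)

lemma shift_eq: "of_int r / of_int m + of_nat s = of_nat p * (of_int t / of_int m :: rat)"
  using t arg_cong[OF shift, of "of_int :: int \<Rightarrow> rat"] by (simp add: field_simps)

lemma padic_dvd_shift: "padic_dvd p 1 (of_int r / of_int m + of_nat s)"
proof -
  have "\<not> int p dvd m"
  proof
    assume "int p dvd m"
    then have "int p dvd gcd m (int p)" by simp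
    then show False using coprime prime_gt_1_nat[OF prime] by simp
  qed
  then show ?thesis
    unfolding shift_eq padic_dvd_def padic_int_def by (intro exI[of _ "of_int t / of_int m"]) auto
qed

lemma Qp_eq_shifted_prod:
  "Qp p r m = (1 - shifted_prod p s (of_int r / of_int m + of_nat s)) / of_nat p"
proof -
  define u where "u = (of_int r / of_int m + of_nat s :: rat)"
  have "pochhammer (1 :: rat) p = of_nat p * fact (p - 1)"
    using fact_reduce[of p] prime_gt_0_nat[OF prime] by (simp add: pochhammer_fact[symmetric])
  moreover have "of_nat p - u = of_nat p * ((of_int m - of_int t) / of_int m)"
    unfolding u_def using shift_eq t by (simp add: field_simps)
  ultimately have "pochhammer (of_int r / of_int m) p * pochhammer (1 - of_int r / of_int m) p
        / (pochhammer 1 p)^2 * (of_int m)^2 / (of_int t * of_int (m - t))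
      = shifted_prod p s u"
    unfolding pochhammer_mult_pochhammer_one_minus[OF s_less] u_def[symmetric]
    using t prime_gt_0_nat[OF prime] unfolding u_def shift_eq
    by (simp add: field_simps power2_eq_square)
  then show ?thesis
    unfolding Qp_def Let_def rat_rep_r_div_p rat_rep_neg_r_div_p u_def by simp
qed

lemma Qp_cong:
  assumes "p > 3"
  shows "padic_dvd p 2 (Qp p r m - (- 2 * harmonic s - 2 * of_nat p * (harmonic s)^2
     - 2 * ((of_int r / of_int m + of_nat s) * (harmonic (p - 1 - s) - harmonic s) / of_nat p)))"
proof -
  define u H D where "u = of_int r / of_int m + (of_nat s :: rat)" and "H = harmonic s"
    and "D = harmonic (p - 1 - s) - harmonic s"
  have "padic_dvd p 3 (shifted_prod p s u - (1 + 2 * of_nat p * H + 2 * (of_nat p)^2 * H^2 + 2 * u * D))"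
    unfolding u_def H_def D_def by (rule shifted_prod_cong[OF prime assms s_less padic_dvd_shift])
  then have "padic_dvd p 2 (- ((shifted_prod p s u - (1 + 2 * of_nat p * H + 2 * (of_nat p)^2 * H^2
      + 2 * u * D)) / of_nat p))"
    using padic_dvd_uminus[OF prime padic_dvd_divide_p[OF prime]] by (simp add: numeral_3_eq_3 numeral_2_eq_2)
  moreover have "- ((shifted_prod p s u - (1 + 2 * of_nat p * H + 2 * (of_nat p)^2 * H^2 + 2 * u * D))
      / of_nat p) = Qp p r m - (- 2 * H - 2 * of_nat p * H^2 - 2 * (u * D / of_nat p))"
    unfolding Qp_eq_shifted_prod u_def[symmetric] using prime_gt_0_nat[OF prime]
    by (simp add: field_simps power2_eq_square)
  ultimately show ?thesis unfolding u_def H_def D_def by simp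
qed

lemma padic_dvd_shift_harmonic_diff:
  assumes "p > 3"
  shows "padic_dvd p 1 ((of_int r / of_int m + of_nat s) * (harmonic (p - 1 - s) - harmonic s) / of_nat p)"
  using padic_dvd_2_mult[OF prime padic_dvd_shift padic_dvd_harmonic_diff[OF prime assms s_less]]
    padic_dvd_divide_p[OF prime, of 1]
  by (simp add: numeral_2_eq_2)

end

theorem theorem3p1:
  fixes p :: nat and r m :: int
  assumes "prime p" and "p > 3" and "0 < r" and "r < m" and "coprime m (int p)"
  shows "rat_cong (int p ^ 2)
           (\<Sum>k=1..p-1. pochhammer (of_int r / of_int m :: rat) k
                          * pochhammer (1 - of_int r / of_int m) k / (pochhammer 1 k)^2
                          * (1 / of_nat k))
           (Qp p r m + 1/2 * of_nat p * (Qp p r m)^2)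
       \<and> rat_cong (int p)
           (\<Sum>k=1..p-1. pochhammer (of_int r / of_int m :: rat) k
                          * pochhammer (1 - of_int r / of_int m) k / (pochhammer 1 k)^2
                          * (1 / (of_nat k)^2))
           (- 1/2 * (Qp p r m)^2)"
proof -
  obtain s t where s: "s < p" and t: "0 < t" "t < m" and shift: "r + int s * m = int p * t"
    using exists_shift[OF assms(1,3,4,5)] by blast
  have odd: "p \<noteq> 2" using assms(2) by simp
  note shifted = padic_dvd_shift[OF assms(1,5) s t shift]
  note cong = padic_dvd_expansion_relations[OF assms(1) odd padic_int_harmonic[OF assms(1) odd s]
      padic_dvd_shift_harmonic_diff[OF assms(1,5) s t shift assms(2)]
      Qp_cong[OF assms(1,5) s t shift assms(2)]
      sum_hterm_div_cong[OF assms(1,2) s shifted] sum_hterm_div_square_cong[OF assms(1,2) s shifted]]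
  show ?thesis
    using rat_cong_if_padic_dvd[OF assms(1) cong(1)] rat_cong_if_padic_dvd[OF assms(1) cong(2)]
    by (simp add: pochhammer_quotient_eq_hterm)
qed

end
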